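(* There exist symmetric spaces $E$ and $F$ on $[0,1]$, with fundamental functions $\varphi$ and $\psi$ respectively (both in $G$), such that $E\subset F$, $\lim_{t\to 0+}\psi(t)/\varphi(t)=0$, and the identity inclusion operator $I:E\to F$ is not disjointly strictly singular.
   Context: All functions are Lebesgue measurable on $[0,1]$, $\mu$ is Lebesgue measure. A symmetric space (SS) on $[0,1]$ is a Banach space $E$ of measurable functions on $[0,1]$ such that: (1) if $y\in E$ and $|x(t)|\le |y(t)|$ then $x\in E$ and $\|x\|\le\|y\|$; (2) if $y\in E$ and $x,y$ are equimeasurable (i.e. $\mu\{|x|>\tau\}=\mu\{|y|>\tau\}$ for all $\tau>0$) then $x\in E$ and $\|x\|=\|y\|$. The fundamental function of $E$ is $f_E(t)=\|\chi_{(0,t)}\|_E$. $G$ denotes the class of all positive increasing concave functions on $(0,1]$. A bounded linear operator $T$ from a Banach lattice $X$ into a Banach space $Y$ is disjointly strictly singular (DSS) if there is no sequence of nonzero pairwise disjoint elements $x_n\in X$ such that the restriction of $T$ to their closed linear span $[x_n]$ is an isomorphism (onto its image). *)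

theory Defs
  imports "HOL-Analysis.Analysis"
begin

abbreviation I01 :: "real measure" where
  "I01 \<equiv> lebesgue_on {0..1}"

text \<open>A symmetric space on [0,1]: a set E of (real-valued) measurable functions,
  with a norm N (a seminorm on functions vanishing exactly on a.e.-null functions,
  so that E modulo a.e. equality is a normed space), which is complete (Banach),
  an ideal with monotone norm, and rearrangement invariant.\<close>
definition symmetric_space :: "(real \<Rightarrow> real) set \<Rightarrow> ((real \<Rightarrow> real) \<Rightarrow> real) \<Rightarrow> bool" where
  "symmetric_space E N \<longleftrightarrow>
     E \<subseteq> borel_measurable I01 \<and>
     (\<lambda>t. 0) \<in> E \<and>
     (\<forall>x\<in>E. \<forall>y\<in>E. (\<lambda>t. x t + y t) \<in> E) \<and>
     (\<forall>x\<in>E. \<forall>c::real. (\<lambda>t. c * x t) \<in> E) \<and>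
     (\<forall>x\<in>E. N x \<ge> 0) \<and>
     (\<forall>x\<in>E. N x = 0 \<longleftrightarrow> (AE t in I01. x t = 0)) \<and>
     (\<forall>x\<in>E. \<forall>y\<in>E. N (\<lambda>t. x t + y t) \<le> N x + N y) \<and>
     (\<forall>x\<in>E. \<forall>c::real. N (\<lambda>t. c * x t) = \<bar>c\<bar> * N x) \<and>
     (\<forall>x::nat \<Rightarrow> real \<Rightarrow> real. (\<forall>n. x n \<in> E) \<longrightarrow>
        (\<forall>e>0. \<exists>M. \<forall>m\<ge>M. \<forall>n\<ge>M. N (\<lambda>t. x m t - x n t) < e) \<longrightarrow>
        (\<exists>y\<in>E. (\<lambda>n. N (\<lambda>t. x n t - y t)) \<longlonglongrightarrow> 0)) \<and>
     (\<forall>x y. y \<in> E \<longrightarrow> x \<in> borel_measurable I01 \<longrightarrow>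
        (AE t in I01. \<bar>x t\<bar> \<le> \<bar>y t\<bar>) \<longrightarrow> x \<in> E \<and> N x \<le> N y) \<and>
     (\<forall>x y. y \<in> E \<longrightarrow> x \<in> borel_measurable I01 \<longrightarrow>
        (\<forall>\<tau>>0. emeasure I01 {t\<in>{0..1}. \<bar>x t\<bar> > \<tau>} = emeasure I01 {t\<in>{0..1}. \<bar>y t\<bar> > \<tau>})
        \<longrightarrow> x \<in> E \<and> N x = N y)"

definition fund_fun :: "((real \<Rightarrow> real) \<Rightarrow> real) \<Rightarrow> real \<Rightarrow> real" where
  "fund_fun N t = N (indicator {0<..<t})"

definition in_G :: "(real \<Rightarrow> real) \<Rightarrow> bool" where
  "in_G \<phi> \<longleftrightarrow> (\<forall>t\<in>{0<..1}. \<phi> t > 0) \<and> mono_on {0<..1} \<phi> \<and> concave_on {0<..1} \<phi>"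

definition lin_span :: "(nat \<Rightarrow> real \<Rightarrow> real) \<Rightarrow> (real \<Rightarrow> real) set" where
  "lin_span x = {y. \<exists>n (c::nat \<Rightarrow> real). y = (\<lambda>t. \<Sum>i<n. c i * x i t)}"

definition closed_lin_span :: "(real \<Rightarrow> real) set \<Rightarrow> ((real \<Rightarrow> real) \<Rightarrow> real) \<Rightarrow>
    (nat \<Rightarrow> real \<Rightarrow> real) \<Rightarrow> (real \<Rightarrow> real) set" where
  "closed_lin_span X NX x =
     {z \<in> X. \<forall>e>0. \<exists>y\<in>lin_span x. NX (\<lambda>t. z t - y t) < e}"

definition DSS :: "(real \<Rightarrow> real) set \<Rightarrow> ((real \<Rightarrow> real) \<Rightarrow> real) \<Rightarrow>
    ((real \<Rightarrow> real) \<Rightarrow> real) \<Rightarrow> ((real \<Rightarrow> real) \<Rightarrow> (real \<Rightarrow> real)) \<Rightarrow> bool" where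
  "DSS X NX NY T \<longleftrightarrow>
     \<not> (\<exists>x::nat \<Rightarrow> real \<Rightarrow> real.
          (\<forall>n. x n \<in> X \<and> NX (x n) \<noteq> 0) \<and>
          (\<forall>i j. i \<noteq> j \<longrightarrow> (AE t in I01. x i t * x j t = 0)) \<and>
          (\<exists>c>0. \<exists>C>0. \<forall>z\<in>closed_lin_span X NX x.
               c * NX z \<le> NY (T z) \<and> NY (T z) \<le> C * NX z))"

end

theory Submission
  imports Defs "HOL-Probability.Distribution_Functions" "HOL-Real_Asymp.Real_Asymp"
begin

text \<open>
  Take $F = L^2$ and $E = L^2 \cap M_\varphi$ with $\varphi(t) = \sqrt{t (2 - \ln t)}$, normed by
  $\|x\|_2 + \|x\|_{M_\varphi}$, where $\|x\|_{M_\varphi} = \sup_t \frac{\varphi(t)}{t} \int_0^t x^*$.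
  Their fundamental functions are $\sqrt t$ and $\sqrt t + \varphi(t)$, whose ratio tends to $0$.
  The function $1/\varphi$ has Marcinkiewicz norm at most $3$, yet
  $\int_0^1 \varphi^{-2} = \int_0^1 \frac{dt}{t (2 - \ln t)} = \infty$. Cutting $1/\varphi$ into
  consecutive blocks of unit $L^2$ norm gives a disjoint sequence on whose span the two norms are
  equivalent: the $L^2$ norm of a combination dominates each coefficient, while its Marcinkiewicz
  norm is at most three times the largest one. So the inclusion $E \to F$ is an isomorphism on
  that span.
\<close>

section \<open>Lebesgue measure on the unit interval\<close>

lemma prob_space_I01: "prob_space I01"
  by (rule prob_spaceI) (simp add: emeasure_restrict_space)

lemma emeasure_I01_Ioo: "0 \<le> s \<Longrightarrow> s \<le> 1 \<Longrightarrow> emeasure I01 {0<..<s} = ennreal s"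
  by (subst emeasure_restrict_space) auto

lemma borel_measurable_I01_ident[measurable]: "(\<lambda>t::real. t) \<in> borel_measurable I01"
  by (rule measurable_restrict_space1, rule measurable_completion) simp

lemma borel_measurable_I01_indicator[measurable]:
  "A \<in> sets borel \<Longrightarrow> (indicator A :: real \<Rightarrow> real) \<in> borel_measurable I01"
  by (rule measurable_restrict_space1, rule measurable_completion) simp

definition equimeasurable :: "(real \<Rightarrow> real) \<Rightarrow> (real \<Rightarrow> real) \<Rightarrow> bool" where
  "equimeasurable x y \<longleftrightarrow>
     (\<forall>\<tau>>0. emeasure I01 {t\<in>{0..1}. \<bar>x t\<bar> > \<tau>} = emeasure I01 {t\<in>{0..1}. \<bar>y t\<bar> > \<tau>})"

lemma real_distribution_distr_abs_I01:
  assumes [measurable]: "z \<in> borel_measurable I01"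
  shows "real_distribution (distr I01 borel (\<lambda>t. \<bar>z t\<bar>))"
  unfolding real_distribution_def real_distribution_axioms_def
  by (auto intro!: prob_space.prob_space_distr[OF prob_space_I01])

lemma cdf_distr_abs_I01:
  assumes [measurable]: "z \<in> borel_measurable I01"
  shows "cdf (distr I01 borel (\<lambda>t. \<bar>z t\<bar>)) a = 1 - measure I01 {t\<in>{0..1}. \<bar>z t\<bar> > a}"
proof -
  interpret prob_space I01 by (rule prob_space_I01)
  have "cdf (distr I01 borel (\<lambda>t. \<bar>z t\<bar>)) a = measure I01 (space I01 - {t\<in>{0..1}. \<bar>z t\<bar> > a})"
    unfolding cdf_def by (subst measure_distr) (auto intro!: arg_cong[where f="measure I01"])
  also have "\<dots> = 1 - measure I01 {t\<in>{0..1}. \<bar>z t\<bar> > a}"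
  proof -
    have "{t \<in> space I01. a < \<bar>z t\<bar>} \<in> sets I01" by measurable
    then show ?thesis using prob_space by (subst finite_measure_Diff) auto
  qed
  finally show ?thesis .
qed

lemma distr_abs_eq_if_equimeasurable:
  fixes x y :: "real \<Rightarrow> real"
  assumes x: "x \<in> borel_measurable I01" and y: "y \<in> borel_measurable I01"
    and eq: "equimeasurable x y"
  shows "distr I01 borel (\<lambda>t. \<bar>x t\<bar>) = distr I01 borel (\<lambda>t. \<bar>y t\<bar>)"
proof -
  let ?F = "\<lambda>z. cdf (distr I01 borel (\<lambda>t. \<bar>z t\<bar>))"
  have pos: "?F x a = ?F y a" if "a > 0" for a
    using eq that x y by (simp add: cdf_distr_abs_I01 equimeasurable_def measure_def)
  have neg: "?F z a = 0" if "a < 0" "z \<in> borel_measurable I01" for a and z :: "real \<Rightarrow> real"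
  proof -
    have "{t\<in>{0..1}. \<bar>z t\<bar> > a} = space I01" using that by auto
    then show ?thesis
      using cdf_distr_abs_I01[OF that(2)] prob_space.prob_space[OF prob_space_I01] by simp
  qed
  have right_cont: "(?F z \<longlongrightarrow> ?F z 0) (at_right 0)"
    if "z \<in> borel_measurable I01" for z :: "real \<Rightarrow> real"
    using finite_borel_measure.cdf_is_right_cont[OF
        real_distribution.finite_borel_measure_M[OF real_distribution_distr_abs_I01[OF that]]]
    by (simp add: continuous_within)
  have "(?F x \<longlongrightarrow> ?F y 0) (at_right 0)"
    by (rule Lim_transform_eventually[OF right_cont[OF y]])
      (auto simp: eventually_at_right_field pos intro!: exI[of _ 1])
  then have "?F x 0 = ?F y 0"
    using right_cont[OF x] tendsto_unique by (metis trivial_limit_at_right_real)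
  then have "?F x = ?F y"
    using pos neg[of _ x] neg[of _ y] x y by (intro ext) (metis linorder_neqE_linordered_idom)
  then show ?thesis by (intro cdf_unique real_distribution_distr_abs_I01 x y)
qed

lemma nn_integral_abs_eq_if_equimeasurable:
  fixes x y :: "real \<Rightarrow> real"
  assumes [measurable]: "x \<in> borel_measurable I01" "y \<in> borel_measurable I01" "f \<in> borel_measurable borel"
    and "equimeasurable x y"
  shows "(\<integral>\<^sup>+t. f \<bar>x t\<bar> \<partial>I01) = (\<integral>\<^sup>+t. f \<bar>y t\<bar> \<partial>I01)"
proof -
  have "(\<integral>\<^sup>+t. f \<bar>x t\<bar> \<partial>I01) = (\<integral>\<^sup>+u. f u \<partial>distr I01 borel (\<lambda>t. \<bar>x t\<bar>))"
    by (subst nn_integral_distr) auto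
  also have "\<dots> = (\<integral>\<^sup>+u. f u \<partial>distr I01 borel (\<lambda>t. \<bar>y t\<bar>))"
    using distr_abs_eq_if_equimeasurable[OF assms(1,2,4)] by simp
  also have "\<dots> = (\<integral>\<^sup>+t. f \<bar>y t\<bar> \<partial>I01)"
    by (subst nn_integral_distr) auto
  finally show ?thesis .
qed

lemma nn_integral_I01_Ioc_FTC:
  fixes F f :: "real \<Rightarrow> real"
  assumes ab: "0 \<le> a" "a \<le> b" "b \<le> 1"
    and deriv: "\<And>s. s \<in> {a..b} \<Longrightarrow> (F has_real_derivative f s) (at s)"
    and nonneg: "\<And>s. s \<in> {a..b} \<Longrightarrow> 0 \<le> f s"
  shows "(\<integral>\<^sup>+s. ennreal (f s) * indicator {a<..b} s \<partial>I01) = ennreal (F b - F a)"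
proof -
  have "(f has_integral (F b - F a)) {a..b}"
  proof (rule fundamental_theorem_of_calculus[OF ab(2)])
    fix s assume "s \<in> {a..b}"
    then show "(F has_vector_derivative f s) (at s within {a..b})"
      using deriv by (simp add: has_real_derivative_iff_has_vector_derivative[symmetric]
          has_field_derivative_at_within)
  qed
  moreover have "(f has_integral y) {a<..b} \<longleftrightarrow> (f has_integral y) {a..b}" for y
  proof (rule has_integral_spike_set_eq)
    have "{s \<in> {a<..b} - {a..b}. f s \<noteq> 0} = {}" by auto
    then show "negligible {s \<in> {a<..b} - {a..b}. f s \<noteq> 0}" by (metis negligible_empty)
    show "negligible {s \<in> {a..b} - {a<..b}. f s \<noteq> 0}"
      by (rule negligible_subset[of "{a}"]) auto
  qed
  ultimately have I: "(f has_integral (F b - F a)) {a<..b}" by simp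
  have "(\<integral>\<^sup>+s. ennreal (f s) * indicator {a<..b} s \<partial>I01) =
        (\<integral>\<^sup>+s. ennreal (f s) * indicator {a<..b} s * indicator {0..1} s \<partial>lebesgue)"
    by (rule nn_integral_restrict_space) auto
  also have "\<dots> = (\<integral>\<^sup>+s. ennreal (f s) * indicator {a<..b} s \<partial>lborel)"
    using ab by (subst nn_integral_completion[symmetric]) (auto intro!: nn_integral_cong simp: indicator_def)
  also have "\<dots> = ennreal (F b - F a)"
    using nonneg by (intro nn_integral_has_integral_lebesgue' I) auto
  finally show ?thesis .
qed

section \<open>Symmetric spaces and disjoint strict singularity\<close>

lemma symmetric_spaceI:
  fixes E :: "(real \<Rightarrow> real) set" and N :: "(real \<Rightarrow> real) \<Rightarrow> real"
  assumes measurable: "E \<subseteq> borel_measurable I01" and zero: "(\<lambda>t. 0) \<in> E"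
    and add: "\<And>x y. x \<in> E \<Longrightarrow> y \<in> E \<Longrightarrow> (\<lambda>t. x t + y t) \<in> E"
    and norm_add: "\<And>x y. x \<in> E \<Longrightarrow> y \<in> E \<Longrightarrow> N (\<lambda>t. x t + y t) \<le> N x + N y"
    and cmult: "\<And>x c. x \<in> E \<Longrightarrow> (\<lambda>t. c * x t) \<in> E"
    and norm_cmult: "\<And>x c. x \<in> E \<Longrightarrow> N (\<lambda>t. c * x t) = \<bar>c\<bar> * N x"
    and nonneg: "\<And>x. x \<in> E \<Longrightarrow> 0 \<le> N x"
    and eq_0_iff: "\<And>x. x \<in> E \<Longrightarrow> N x = 0 \<longleftrightarrow> (AE t in I01. x t = 0)"
    and complete: "\<And>x. (\<And>n. x n \<in> E) \<Longrightarrow> \<forall>e>0. \<exists>M. \<forall>m\<ge>M. \<forall>n\<ge>M. N (\<lambda>t. x m t - x n t) < e \<Longrightarrow>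
          \<exists>y\<in>E. (\<lambda>n. N (\<lambda>t. x n t - y t)) \<longlonglongrightarrow> 0"
    and ideal: "\<And>x y. y \<in> E \<Longrightarrow> x \<in> borel_measurable I01 \<Longrightarrow> AE t in I01. \<bar>x t\<bar> \<le> \<bar>y t\<bar> \<Longrightarrow>
          x \<in> E \<and> N x \<le> N y"
    and rearrangement: "\<And>x y. y \<in> E \<Longrightarrow> x \<in> borel_measurable I01 \<Longrightarrow> equimeasurable x y \<Longrightarrow>
          x \<in> E \<and> N x = N y"
  shows "symmetric_space E N"
  unfolding symmetric_space_def
  apply (intro conjI)
  subgoal by (fact measurable)
  subgoal by (fact zero)
  subgoal using add by blast
  subgoal using cmult by blast
  subgoal using nonneg by blast
  subgoal using eq_0_iff by blast
  subgoal using norm_add by blast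
  subgoal using norm_cmult by blast
  subgoal using complete by blast
  subgoal using ideal by blast
  subgoal using rearrangement unfolding equimeasurable_def by blast
  done

lemma symmetric_space_zero:
  assumes "symmetric_space E N"
  shows "(\<lambda>t. 0) \<in> E"
  using assms unfolding symmetric_space_def by (elim conjE) assumption

lemma symmetric_space_add:
  assumes "symmetric_space E N" "x \<in> E" "y \<in> E"
  shows "(\<lambda>t. x t + y t) \<in> E"
proof -
  have "\<forall>x\<in>E. \<forall>y\<in>E. (\<lambda>t. x t + y t) \<in> E"
    using assms(1) unfolding symmetric_space_def by (elim conjE) assumption
  then show ?thesis using assms(2,3) by blast
qed

lemma symmetric_space_cmult:
  assumes "symmetric_space E N" "x \<in> E"
  shows "(\<lambda>t. c * x t) \<in> E"
proof -
  have "\<forall>x\<in>E. \<forall>c::real. (\<lambda>t. c * x t) \<in> E"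
    using assms(1) unfolding symmetric_space_def by (elim conjE) assumption
  then show ?thesis using assms(2) by blast
qed

lemma symmetric_space_norm_add:
  assumes "symmetric_space E N" "x \<in> E" "y \<in> E"
  shows "N (\<lambda>t. x t + y t) \<le> N x + N y"
proof -
  have "\<forall>x\<in>E. \<forall>y\<in>E. N (\<lambda>t. x t + y t) \<le> N x + N y"
    using assms(1) unfolding symmetric_space_def by (elim conjE) assumption
  then show ?thesis using assms(2,3) by blast
qed

lemma symmetric_space_norm_cmult:
  assumes "symmetric_space E N" "x \<in> E"
  shows "N (\<lambda>t. c * x t) = \<bar>c\<bar> * N x"
proof -
  have "\<forall>x\<in>E. \<forall>c::real. N (\<lambda>t. c * x t) = \<bar>c\<bar> * N x"
    using assms(1) unfolding symmetric_space_def by (elim conjE) assumption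
  then show ?thesis using assms(2) by blast
qed

lemma symmetric_space_diff:
  assumes "symmetric_space E N" "x \<in> E" "y \<in> E"
  shows "(\<lambda>t. x t - y t) \<in> E"
  using symmetric_space_add[OF assms(1,2) symmetric_space_cmult[OF assms(1,3), of "-1"]] by simp

lemma symmetric_space_norm_diff_commute:
  assumes "symmetric_space E N" "x \<in> E" "y \<in> E"
  shows "N (\<lambda>t. x t - y t) = N (\<lambda>t. y t - x t)"
  using symmetric_space_norm_cmult[OF assms(1) symmetric_space_diff[OF assms(1,3,2)], of "-1"] by simp

lemma symmetric_space_norm_le_diff:
  assumes "symmetric_space E N" "x \<in> E" "y \<in> E"
  shows "N x \<le> N y + N (\<lambda>t. x t - y t)"
  using symmetric_space_norm_add[OF assms(1,3) symmetric_space_diff[OF assms(1,2,3)]] by simp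

lemma lin_span_subset:
  assumes "symmetric_space E N" "\<And>n. x n \<in> E"
  shows "lin_span x \<subseteq> E"
proof -
  have "(\<lambda>t. \<Sum>i<n. c i * x i t) \<in> E" for n c
    by (induction n)
      (simp_all add: symmetric_space_zero[OF assms(1)] symmetric_space_add[OF assms(1)]
        symmetric_space_cmult[OF assms(1)] assms(2))
  then show ?thesis unfolding lin_span_def by blast
qed

lemma LIMSEQ_zero_if_eventually_le:
  fixes f :: "nat \<Rightarrow> real"
  assumes "\<And>n. 0 \<le> f n" "\<forall>e>0. \<exists>M. \<forall>n\<ge>M. f n \<le> e"
  shows "f \<longlonglongrightarrow> 0"
proof (rule LIMSEQ_I)
  fix r :: real assume "0 < r"
  then obtain M where M: "\<forall>n\<ge>M. f n \<le> r / 2" using assms(2) half_gt_zero by blast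
  show "\<exists>M. \<forall>n\<ge>M. norm (f n - 0) < r"
  proof (intro exI allI impI)
    fix n assume "M \<le> n"
    then have "f n \<le> r / 2" using M by blast
    then show "norm (f n - 0) < r" using assms(1)[of n] \<open>0 < r\<close> by simp
  qed
qed

lemma Cauchy_if_norm_le:
  fixes N N' :: "(real \<Rightarrow> real) \<Rightarrow> real"
  assumes le: "\<And>z. N z \<le> N' z"
    and Cauchy: "\<forall>e>0. \<exists>M. \<forall>m\<ge>M. \<forall>n\<ge>M. N' (\<lambda>t. x m t - x n t) < e"
  shows "\<forall>e>0. \<exists>M. \<forall>m\<ge>M. \<forall>n\<ge>M. N (\<lambda>t. x m t - x n t) < e"
proof (intro allI impI)
  fix e :: real assume "0 < e"
  obtain M where M: "\<forall>m\<ge>M. \<forall>n\<ge>M. N' (\<lambda>t. x m t - x n t) < e"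
    using Cauchy[rule_format, OF \<open>0 < e\<close>] by blast
  have "N (\<lambda>t. x m t - x n t) < e" if "M \<le> m" "M \<le> n" for m n
    using M[rule_format, OF that] le by (rule le_less_trans[rotated])
  then show "\<exists>M. \<forall>m\<ge>M. \<forall>n\<ge>M. N (\<lambda>t. x m t - x n t) < e" by blast
qed

lemma closed_lin_span_norm_le:
  assumes E: "symmetric_space E NE" and F: "symmetric_space F NF" and "E \<subseteq> F"
    and dom: "\<And>z. z \<in> E \<Longrightarrow> NF z \<le> NE z" and x: "\<And>n. x n \<in> E"
    and span: "\<And>y. y \<in> lin_span x \<Longrightarrow> NE y \<le> C * NF y" and "0 \<le> C"
    and z: "z \<in> closed_lin_span E NE x"
  shows "NE z \<le> C * NF z"
proof (rule field_le_epsilon)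
  fix e :: real assume "0 < e"
  then have "0 < e / (C + 1)" using \<open>0 \<le> C\<close> by simp
  moreover have zE: "z \<in> E" and "\<forall>e>0. \<exists>y\<in>lin_span x. NE (\<lambda>t. z t - y t) < e"
    using z by (simp_all add: closed_lin_span_def)
  ultimately obtain y where y: "y \<in> lin_span x" "NE (\<lambda>t. z t - y t) < e / (C + 1)"
    by blast
  have yE: "y \<in> E" using lin_span_subset[of E NE x, OF E x] y(1) by blast
  have "NE z \<le> NE y + NE (\<lambda>t. z t - y t)"
    by (rule symmetric_space_norm_le_diff[OF E zE yE])
  moreover have "NE y \<le> C * NF z + C * NF (\<lambda>t. z t - y t)"
  proof -
    have "NF y \<le> NF z + NF (\<lambda>t. y t - z t)"
      using symmetric_space_norm_le_diff[OF F] yE zE \<open>E \<subseteq> F\<close> by blast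
    also have "NF (\<lambda>t. y t - z t) = NF (\<lambda>t. z t - y t)"
      using symmetric_space_norm_diff_commute[OF F] yE zE \<open>E \<subseteq> F\<close> by blast
    finally show ?thesis
      using span[OF y(1)] \<open>0 \<le> C\<close> by (smt (verit, best) distrib_left mult_left_mono)
  qed
  moreover have "C * NF (\<lambda>t. z t - y t) \<le> C * NE (\<lambda>t. z t - y t)"
    using dom[OF symmetric_space_diff[OF E zE yE]] \<open>0 \<le> C\<close> by (rule mult_left_mono)
  moreover have "(C + 1) * NE (\<lambda>t. z t - y t) < e"
    using y(2) \<open>0 \<le> C\<close> by (simp add: pos_less_divide_eq mult.commute)
  ultimately show "NE z \<le> C * NF z + e" by (simp add: distrib_right)
qed

lemma not_DSS_if_norms_equivalent_on_lin_span:
  assumes E: "symmetric_space E NE" and F: "symmetric_space F NF" and "E \<subseteq> F"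
    and dom: "\<And>z. z \<in> E \<Longrightarrow> NF z \<le> NE z"
    and x: "\<And>n. x n \<in> E" "\<And>n. NE (x n) \<noteq> 0"
    and disjoint: "\<And>i j. i \<noteq> j \<Longrightarrow> AE t in I01. x i t * x j t = 0"
    and span: "\<And>y. y \<in> lin_span x \<Longrightarrow> NE y \<le> C * NF y" and "0 < C"
  shows "\<not> DSS E NE NF (\<lambda>z. z)"
proof -
  have "1 / C * NE z \<le> NF z \<and> NF z \<le> 1 * NE z" if z: "z \<in> closed_lin_span E NE x" for z
  proof
    have "NE z \<le> C * NF z"
      using closed_lin_span_norm_le[OF E F \<open>E \<subseteq> F\<close> dom x(1) span _ z] \<open>0 < C\<close> by simp
    then show "1 / C * NE z \<le> NF z" using \<open>0 < C\<close> by (simp add: field_simps)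
    show "NF z \<le> 1 * NE z" using dom z by (simp add: closed_lin_span_def)
  qed
  then show ?thesis
    unfolding DSS_def not_not using x disjoint \<open>0 < C\<close>
    by (intro exI[of _ x] conjI allI impI exI[of _ "1 / C"] exI[of _ "1::real"]) auto
qed

section \<open>The $K$-functional of $(L^1, L^\infty)$ and Marcinkiewicz norms\<close>

lemma INF_ennreal_add_const_set:
  fixes f :: "'a \<Rightarrow> ennreal"
  assumes "A \<noteq> {}"
  shows "(INF i\<in>A. f i + c) = (INF i\<in>A. f i) + c"
  using continuous_at_Inf_mono[of "\<lambda>x. x + c" "f`A"]
  using continuous_add[of "at_right (Inf (f`A))", of "\<lambda>x. x" "\<lambda>x. c"] assms
  by (auto simp: mono_def image_comp)

lemma ennreal_le_INF_add:
  fixes f g :: "'a \<Rightarrow> ennreal"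
  assumes "A \<noteq> {}" "B \<noteq> {}" and le: "\<And>a b. a \<in> A \<Longrightarrow> b \<in> B \<Longrightarrow> c \<le> f a + g b"
  shows "c \<le> (INF a\<in>A. f a) + (INF b\<in>B. g b)"
proof -
  have "c \<le> (INF a\<in>A. f a) + g b" if "b \<in> B" for b
  proof -
    have "c \<le> (INF a\<in>A. f a + g b)" using le that by (auto intro: INF_greatest)
    then show ?thesis using INF_ennreal_add_const_set[OF assms(1)] by simp
  qed
  then have "c \<le> (INF b\<in>B. (INF a\<in>A. f a) + g b)" by (auto intro: INF_greatest)
  also have "\<dots> = (INF a\<in>A. f a) + (INF b\<in>B. g b)"
    using INF_ennreal_add_const_set[OF assms(2), of g "INF a\<in>A. f a"] by (simp add: add.commute)
  finally show ?thesis .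
qed

text \<open>Since \<^const>\<open>ennreal\<close> clips negative values to $0$, this is $\int (|x| - s)^+$.\<close>
definition excess_integral :: "real \<Rightarrow> (real \<Rightarrow> real) \<Rightarrow> ennreal" where
  "excess_integral s x = (\<integral>\<^sup>+t. ennreal (\<bar>x t\<bar> - s) \<partial>I01)"

text \<open>Peetre's $K$-functional $K(r, x; L^1, L^\infty)$, which equals $\int_0^r x^*$; the
  infimum formula avoids decreasing rearrangements altogether.\<close>

definition K_functional :: "real \<Rightarrow> (real \<Rightarrow> real) \<Rightarrow> ennreal" where
  "K_functional r x = (INF s\<in>{0..}. ennreal (r * s) + excess_integral s x)"

lemma K_functional_le: "0 \<le> s \<Longrightarrow> K_functional r x \<le> ennreal (r * s) + excess_integral s x"
  unfolding K_functional_def by (rule INF_lower) auto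

lemma K_functional_le_L1: "K_functional r x \<le> (\<integral>\<^sup>+t. ennreal \<bar>x t\<bar> \<partial>I01)"
  using K_functional_le[of 0 r x] by (simp add: excess_integral_def)

lemma K_functional_zero[simp]: "K_functional r (\<lambda>t. 0) = 0"
  using K_functional_le_L1[of r "\<lambda>t. 0"] by simp

lemma excess_integral_mono:
  "AE t in I01. \<bar>x t\<bar> \<le> \<bar>y t\<bar> \<Longrightarrow> excess_integral s x \<le> excess_integral s y"
  unfolding excess_integral_def
  by (rule nn_integral_mono_AE) (auto elim!: eventually_mono intro!: ennreal_leI)

lemma K_functional_mono:
  "AE t in I01. \<bar>x t\<bar> \<le> \<bar>y t\<bar> \<Longrightarrow> K_functional r x \<le> K_functional r y"
  unfolding K_functional_def by (intro INF_mono) (auto intro!: bexI add_mono excess_integral_mono)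

lemma excess_integral_add:
  fixes x y :: "real \<Rightarrow> real"
  assumes [measurable]: "x \<in> borel_measurable I01" "y \<in> borel_measurable I01"
  shows "excess_integral (s1 + s2) (\<lambda>t. x t + y t) \<le> excess_integral s1 x + excess_integral s2 y"
proof -
  have "ennreal (\<bar>x t + y t\<bar> - (s1 + s2)) \<le> ennreal (\<bar>x t\<bar> - s1) + ennreal (\<bar>y t\<bar> - s2)" for t
  proof -
    have "ennreal (\<bar>x t + y t\<bar> - (s1 + s2)) \<le> ennreal (max (\<bar>x t\<bar> - s1) 0 + max (\<bar>y t\<bar> - s2) 0)"
      by (intro ennreal_leI) auto
    also have "\<dots> = ennreal (\<bar>x t\<bar> - s1) + ennreal (\<bar>y t\<bar> - s2)"
      by (subst ennreal_plus) (auto simp: max_def ennreal_neg)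
    finally show ?thesis .
  qed
  then have "excess_integral (s1 + s2) (\<lambda>t. x t + y t) \<le>
      (\<integral>\<^sup>+t. ennreal (\<bar>x t\<bar> - s1) + ennreal (\<bar>y t\<bar> - s2) \<partial>I01)"
    unfolding excess_integral_def by (rule nn_integral_mono)
  also have "\<dots> = excess_integral s1 x + excess_integral s2 y"
    unfolding excess_integral_def by (rule nn_integral_add) auto
  finally show ?thesis .
qed

lemma K_functional_add:
  fixes x y :: "real \<Rightarrow> real"
  assumes [measurable]: "x \<in> borel_measurable I01" "y \<in> borel_measurable I01" and r: "0 \<le> r"
  shows "K_functional r (\<lambda>t. x t + y t) \<le> K_functional r x + K_functional r y"
  unfolding K_functional_def[of r x] K_functional_def[of r y]
proof (rule ennreal_le_INF_add)
  fix s1 s2 :: real assume s: "s1 \<in> {0..}" "s2 \<in> {0..}"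
  then have "K_functional r (\<lambda>t. x t + y t) \<le>
      ennreal (r * (s1 + s2)) + excess_integral (s1 + s2) (\<lambda>t. x t + y t)"
    by (intro K_functional_le) auto
  also have "\<dots> \<le> ennreal (r * s1) + ennreal (r * s2) + (excess_integral s1 x + excess_integral s2 y)"
    using s r by (intro add_mono excess_integral_add)
      (auto simp: distrib_left ennreal_plus[symmetric] simp del: ennreal_plus)
  finally show "K_functional r (\<lambda>t. x t + y t) \<le>
      ennreal (r * s1) + excess_integral s1 x + (ennreal (r * s2) + excess_integral s2 y)"
    by (simp add: ac_simps)
qed auto

lemma excess_integral_cmult:
  fixes x :: "real \<Rightarrow> real"
  assumes [measurable]: "x \<in> borel_measurable I01" and c: "0 \<le> c"
  shows "excess_integral (c * s) (\<lambda>t. c * x t) = ennreal c * excess_integral s x"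
proof -
  have "excess_integral (c * s) (\<lambda>t. c * x t) = (\<integral>\<^sup>+t. ennreal c * ennreal (\<bar>x t\<bar> - s) \<partial>I01)"
    unfolding excess_integral_def using c
    by (intro nn_integral_cong) (auto simp: abs_mult right_diff_distrib ennreal_mult'[symmetric])
  also have "\<dots> = ennreal c * excess_integral s x"
    unfolding excess_integral_def by (rule nn_integral_cmult) auto
  finally show ?thesis .
qed

lemma K_functional_cmult_ge:
  fixes x :: "real \<Rightarrow> real"
  assumes [measurable]: "x \<in> borel_measurable I01" and c: "c \<noteq> 0"
  shows "ennreal \<bar>c\<bar> * K_functional r x \<le> K_functional r (\<lambda>t. c * x t)"
  unfolding K_functional_def[of r "\<lambda>t. c * x t"]
proof (rule INF_greatest)
  fix s :: real assume s: "s \<in> {0..}"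
  define s' where "s' = s / \<bar>c\<bar>"
  have s': "s = \<bar>c\<bar> * s'" "0 \<le> s'" using c s by (auto simp: s'_def)
  have "excess_integral s (\<lambda>t. c * x t) = excess_integral (\<bar>c\<bar> * s') (\<lambda>t. \<bar>c\<bar> * x t)"
    unfolding excess_integral_def s' by (simp add: abs_mult)
  also have "\<dots> = ennreal \<bar>c\<bar> * excess_integral s' x" by (rule excess_integral_cmult) auto
  finally have "ennreal (r * s) + excess_integral s (\<lambda>t. c * x t) =
      ennreal \<bar>c\<bar> * (ennreal (r * s') + excess_integral s' x)"
    by (simp add: s' distrib_left ennreal_mult'[symmetric] ac_simps)
  also have "\<dots> \<ge> ennreal \<bar>c\<bar> * K_functional r x"
    by (intro mult_left_mono K_functional_le s') auto
  finally show "ennreal \<bar>c\<bar> * K_functional r x \<le> ennreal (r * s) + excess_integral s (\<lambda>t. c * x t)" .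
qed

lemma K_functional_cmult:
  fixes x :: "real \<Rightarrow> real"
  assumes [measurable]: "x \<in> borel_measurable I01"
  shows "K_functional r (\<lambda>t. c * x t) = ennreal \<bar>c\<bar> * K_functional r x"
proof (cases "c = 0")
  case False
  have "ennreal \<bar>inverse c\<bar> * K_functional r (\<lambda>t. c * x t) \<le> K_functional r (\<lambda>t. inverse c * (c * x t))"
    using False by (intro K_functional_cmult_ge) auto
  also have "(\<lambda>t. inverse c * (c * x t)) = x" using False by auto
  finally have "ennreal \<bar>c\<bar> * (ennreal \<bar>inverse c\<bar> * K_functional r (\<lambda>t. c * x t)) \<le>
      ennreal \<bar>c\<bar> * K_functional r x"
    by (rule mult_left_mono) auto
  also have "ennreal \<bar>c\<bar> * (ennreal \<bar>inverse c\<bar> * K_functional r (\<lambda>t. c * x t)) =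
      K_functional r (\<lambda>t. c * x t)"
    using False by (simp add: mult.assoc[symmetric] ennreal_mult[symmetric] abs_mult[symmetric]
        del: ennreal_mult' ennreal_mult'')
  finally show ?thesis using K_functional_cmult_ge[OF assms False] by (rule antisym)
qed simp

lemma K_functional_equimeasurable:
  assumes "x \<in> borel_measurable I01" "y \<in> borel_measurable I01" "equimeasurable x y"
  shows "K_functional r x = K_functional r y"
proof -
  have "excess_integral s x = excess_integral s y" for s
    unfolding excess_integral_def
    using nn_integral_abs_eq_if_equimeasurable[OF assms(1,2) _ assms(3), of "\<lambda>u. ennreal (u - s)"]
    by simp
  then show ?thesis unfolding K_functional_def by simp
qed

lemma excess_integral_indicator:
  assumes "0 \<le> r" "0 \<le> s" "s \<le> 1"
  shows "excess_integral r (indicator {0<..<s}) = ennreal (1 - r) * ennreal s"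
proof -
  have "excess_integral r (indicator {0<..<s}) =
      (\<integral>\<^sup>+t. ennreal (1 - r) * indicator {0<..<s} t \<partial>I01)"
    unfolding excess_integral_def using assms
    by (intro nn_integral_cong) (auto simp: indicator_def ennreal_neg)
  also have "\<dots> = ennreal (1 - r) * emeasure I01 {0<..<s}"
    using assms by (intro nn_integral_cmult_indicator) (auto intro: sets_restrict_space_iff[THEN iffD2])
  finally show ?thesis using emeasure_I01_Ioo assms by simp
qed

lemma K_functional_indicator:
  assumes "0 < r" "0 < s" "s \<le> 1"
  shows "K_functional r (indicator {0<..<s}) = ennreal (min r s)"
proof (rule antisym)
  have "K_functional r (indicator {0<..<s}) \<le> ennreal (r * 0) + excess_integral 0 (indicator {0<..<s})"
    by (rule K_functional_le) simp
  moreover have "K_functional r (indicator {0<..<s}) \<le> ennreal (r * 1) + excess_integral 1 (indicator {0<..<s})"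
    by (rule K_functional_le) simp
  ultimately show "K_functional r (indicator {0<..<s}) \<le> ennreal (min r s)"
    using assms by (simp add: excess_integral_indicator min_def)
next
  show "ennreal (min r s) \<le> K_functional r (indicator {0<..<s})"
    unfolding K_functional_def
  proof (rule INF_greatest)
    fix u :: real assume u: "u \<in> {0..}"
    show "ennreal (min r s) \<le> ennreal (r * u) + excess_integral u (indicator {0<..<s})"
    proof (cases "u \<le> 1")
      case True
      have "min r s = u * min r s + (1 - u) * min r s" by (simp add: algebra_simps)
      also have "\<dots> \<le> u * r + (1 - u) * s"
        using u True by (intro add_mono mult_left_mono) auto
      finally have "ennreal (min r s) \<le> ennreal (r * u) + ennreal ((1 - u) * s)"
        using u True assms by (simp add: mult.commute flip: ennreal_plus del: ennreal_plus)
      then show ?thesis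
        using u True assms by (simp add: excess_integral_indicator ennreal_mult)
    next
      case False
      then have "ennreal (min r s) \<le> ennreal (r * u)"
        using assms by (intro ennreal_leI) (auto simp: min_def intro: order.trans[of _ r])
      then show ?thesis by (rule order.trans) simp
    qed
  qed
qed

definition marcinkiewicz_norm :: "(real \<Rightarrow> real) \<Rightarrow> (real \<Rightarrow> real) \<Rightarrow> ennreal" where
  "marcinkiewicz_norm \<phi> x = (SUP t\<in>{0<..1}. ennreal (\<phi> t / t) * K_functional t x)"

lemma marcinkiewicz_norm_ge:
  "t \<in> {0<..1} \<Longrightarrow> ennreal (\<phi> t / t) * K_functional t x \<le> marcinkiewicz_norm \<phi> x"
  unfolding marcinkiewicz_norm_def by (rule SUP_upper)

lemma marcinkiewicz_norm_add:
  fixes x y :: "real \<Rightarrow> real"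
  assumes "x \<in> borel_measurable I01" "y \<in> borel_measurable I01"
  shows "marcinkiewicz_norm \<phi> (\<lambda>t. x t + y t) \<le> marcinkiewicz_norm \<phi> x + marcinkiewicz_norm \<phi> y"
  unfolding marcinkiewicz_norm_def[of \<phi> "\<lambda>t. x t + y t"]
proof (rule SUP_least)
  fix t :: real assume t: "t \<in> {0<..1}"
  have "ennreal (\<phi> t / t) * K_functional t (\<lambda>t. x t + y t) \<le>
      ennreal (\<phi> t / t) * K_functional t x + ennreal (\<phi> t / t) * K_functional t y"
    using t assms by (simp add: K_functional_add mult_left_mono flip: distrib_left)
  also have "\<dots> \<le> marcinkiewicz_norm \<phi> x + marcinkiewicz_norm \<phi> y"
    using t by (intro add_mono marcinkiewicz_norm_ge)
  finally show "ennreal (\<phi> t / t) * K_functional t (\<lambda>t. x t + y t) \<le> \<dots>" .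
qed

lemma marcinkiewicz_norm_cmult:
  "x \<in> borel_measurable I01 \<Longrightarrow>
    marcinkiewicz_norm \<phi> (\<lambda>t. c * x t) = ennreal \<bar>c\<bar> * marcinkiewicz_norm \<phi> x"
  unfolding marcinkiewicz_norm_def SUP_mult_left_ennreal by (simp add: K_functional_cmult ac_simps)

lemma marcinkiewicz_norm_diff:
  assumes [measurable]: "x \<in> borel_measurable I01" "y \<in> borel_measurable I01"
  shows "marcinkiewicz_norm \<phi> (\<lambda>t. x t - y t) \<le> marcinkiewicz_norm \<phi> x + marcinkiewicz_norm \<phi> y"
  using marcinkiewicz_norm_add[of x "\<lambda>t. (-1) * y t" \<phi>] marcinkiewicz_norm_cmult[of y \<phi> "-1"]
  by simp

lemma marcinkiewicz_norm_mono:
  "AE t in I01. \<bar>x t\<bar> \<le> \<bar>y t\<bar> \<Longrightarrow> marcinkiewicz_norm \<phi> x \<le> marcinkiewicz_norm \<phi> y"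
  unfolding marcinkiewicz_norm_def by (intro SUP_mono) (auto intro!: bexI mult_left_mono K_functional_mono)

lemma marcinkiewicz_norm_equimeasurable:
  "x \<in> borel_measurable I01 \<Longrightarrow> y \<in> borel_measurable I01 \<Longrightarrow> equimeasurable x y \<Longrightarrow>
    marcinkiewicz_norm \<phi> x = marcinkiewicz_norm \<phi> y"
  unfolding marcinkiewicz_norm_def by (simp add: K_functional_equimeasurable)

lemma marcinkiewicz_norm_AE_zero:
  assumes "AE t in I01. x t = 0"
  shows "marcinkiewicz_norm \<phi> x = 0"
proof -
  have "marcinkiewicz_norm \<phi> x \<le> marcinkiewicz_norm \<phi> (\<lambda>t. 0)"
    using assms by (intro marcinkiewicz_norm_mono) (auto elim: eventually_mono)
  then show ?thesis by (simp add: marcinkiewicz_norm_def)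
qed

lemma marcinkiewicz_norm_indicator:
  assumes s: "0 < s" "s \<le> 1"
    and pos: "\<And>t. t \<in> {0<..1} \<Longrightarrow> 0 < \<phi> t"
    and mono: "mono_on {0<..1} \<phi>"
    and quot_anti: "\<And>t u. 0 < t \<Longrightarrow> t \<le> u \<Longrightarrow> u \<le> 1 \<Longrightarrow> \<phi> u / u \<le> \<phi> t / t"
  shows "marcinkiewicz_norm \<phi> (indicator {0<..<s}) = ennreal (\<phi> s)"
proof (rule antisym)
  show "marcinkiewicz_norm \<phi> (indicator {0<..<s}) \<le> ennreal (\<phi> s)"
    unfolding marcinkiewicz_norm_def
  proof (rule SUP_least)
    fix t :: real assume t: "t \<in> {0<..1}"
    have "\<phi> t / t * min t s \<le> \<phi> s"
    proof (cases "t \<le> s")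
      case True
      then show ?thesis using t s mono_onD[OF mono, of t s] by (simp add: min_def)
    next
      case False
      then have "\<phi> t / t * s \<le> \<phi> s / s * s"
        using t s quot_anti[of s t] by (intro mult_right_mono) auto
      then show ?thesis using False s by (simp add: min_def)
    qed
    then show "ennreal (\<phi> t / t) * K_functional t (indicator {0<..<s}) \<le> ennreal (\<phi> s)"
      using t s pos[of t] by (simp add: K_functional_indicator ennreal_mult[symmetric] ennreal_leI
          del: ennreal_mult' ennreal_mult'')
  qed
next
  have "ennreal (\<phi> s / s) * K_functional s (indicator {0<..<s}) = ennreal (\<phi> s)"
    using s pos[of s] by (simp add: K_functional_indicator ennreal_mult[symmetric])
  then show "ennreal (\<phi> s) \<le> marcinkiewicz_norm \<phi> (indicator {0<..<s})"
    using marcinkiewicz_norm_ge[of s \<phi> "indicator {0<..<s}"] s by simp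
qed

section \<open>The space $L^2$\<close>

lemma Cauchy_fast_subsequence:
  fixes d :: "nat \<Rightarrow> nat \<Rightarrow> real"
  assumes "\<forall>e>0. \<exists>M. \<forall>m\<ge>M. \<forall>n\<ge>M. d m n < e"
  obtains r where "strict_mono r" "\<And>k. d (r (Suc k)) (r k) < (1/2)^k"
proof -
  have "\<forall>k. \<exists>M. \<forall>m\<ge>M. \<forall>n\<ge>M. d m n < (1/2)^k"
    using assms by simp
  then obtain M where M: "\<And>k m n. M k \<le> m \<Longrightarrow> M k \<le> n \<Longrightarrow> d m n < (1/2)^k"
    by metis
  define r where "r k = k + (\<Sum>i\<le>k. M i)" for k
  have "strict_mono r"
    unfolding r_def by (rule strict_mono_Suc_iff[THEN iffD2]) auto
  moreover have "M k \<le> r k" for k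
    unfolding r_def using member_le_sum[of k "{..k}" M] by auto
  ultimately show ?thesis
  proof (intro that)
    fix k
    have "M k \<le> r k" "r k \<le> r (Suc k)"
      using \<open>\<And>k. M k \<le> r k\<close> strict_mono_leD[OF \<open>strict_mono r\<close>, of k "Suc k"] by auto
    then show "d (r (Suc k)) (r k) < (1/2)^k" by (intro M) auto
  qed
qed

lemma AE_convergent_if_summable_increments:
  fixes x :: "nat \<Rightarrow> 'a \<Rightarrow> real"
  assumes [measurable]: "\<And>k. x k \<in> borel_measurable M"
    and bound: "\<And>k. (\<integral>\<^sup>+t. ennreal \<bar>x (Suc k) t - x k t\<bar> \<partial>M) \<le> ennreal (c k)"
    and "summable c" "\<And>k. 0 \<le> c k"
  shows "AE t in M. convergent (\<lambda>k. x k t)"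
proof -
  have "(\<integral>\<^sup>+t. (\<Sum>k. ennreal \<bar>x (Suc k) t - x k t\<bar>) \<partial>M) =
      (\<Sum>k. \<integral>\<^sup>+t. ennreal \<bar>x (Suc k) t - x k t\<bar> \<partial>M)"
    by (rule nn_integral_suminf) measurable
  also have "\<dots> \<le> (\<Sum>k. ennreal (c k))"
    using bound by (intro suminf_le) auto
  also have "\<dots> = ennreal (\<Sum>k. c k)"
    using assms by (intro suminf_ennreal2) auto
  finally have "(\<integral>\<^sup>+t. (\<Sum>k. ennreal \<bar>x (Suc k) t - x k t\<bar>) \<partial>M) < \<infinity>"
    by (rule le_less_trans) simp
  then have "AE t in M. (\<Sum>k. ennreal \<bar>x (Suc k) t - x k t\<bar>) \<noteq> \<infinity>"
    by (intro nn_integral_PInf_AE) auto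
  then show ?thesis
  proof (rule eventually_mono)
    fix t assume "(\<Sum>k. ennreal \<bar>x (Suc k) t - x k t\<bar>) \<noteq> \<infinity>"
    then have "summable (\<lambda>k. \<bar>x (Suc k) t - x k t\<bar>)"
      by (intro summable_suminf_not_top) auto
    then have "(\<lambda>n. \<Sum>k<n. x (Suc k) t - x k t) \<longlonglongrightarrow> (\<Sum>k. x (Suc k) t - x k t)"
      by (rule summable_LIMSEQ[OF summable_rabs_cancel])
    then have "(\<lambda>n. x 0 t + (\<Sum>k<n. x (Suc k) t - x k t)) \<longlonglongrightarrow> x 0 t + (\<Sum>k. x (Suc k) t - x k t)"
      by (intro tendsto_add tendsto_const)
    then have "(\<lambda>n. x n t) \<longlonglongrightarrow> x 0 t + (\<Sum>k. x (Suc k) t - x k t)"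
      by (simp add: sum_lessThan_telescope[where f="\<lambda>k. x k t"])
    then show "convergent (\<lambda>k. x k t)" by (rule convergentI)
  qed
qed

definition sq_nn_integral :: "(real \<Rightarrow> real) \<Rightarrow> ennreal" where
  "sq_nn_integral x = (\<integral>\<^sup>+t. ennreal ((x t)\<^sup>2) \<partial>I01)"

definition L2_space :: "(real \<Rightarrow> real) set" where
  "L2_space = {x \<in> borel_measurable I01. sq_nn_integral x < \<infinity>}"

definition L2_norm :: "(real \<Rightarrow> real) \<Rightarrow> real" where
  "L2_norm x = sqrt (enn2real (sq_nn_integral x))"

lemma L2_space_measurable: "x \<in> L2_space \<Longrightarrow> x \<in> borel_measurable I01"
  by (simp add: L2_space_def)

lemma L2_norm_nonneg: "0 \<le> L2_norm x"
  unfolding L2_norm_def by simp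

lemma sq_nn_integral_eq: "x \<in> L2_space \<Longrightarrow> sq_nn_integral x = ennreal ((L2_norm x)\<^sup>2)"
  unfolding L2_space_def L2_norm_def by (auto simp: ennreal_enn2real_if)

lemma sq_nn_integral_mono:
  "AE t in I01. \<bar>x t\<bar> \<le> \<bar>y t\<bar> \<Longrightarrow> sq_nn_integral x \<le> sq_nn_integral y"
  unfolding sq_nn_integral_def
  by (rule nn_integral_mono_AE) (auto elim!: eventually_mono intro!: ennreal_leI simp: abs_le_square_iff)

lemma sq_nn_integral_cmult:
  "x \<in> borel_measurable I01 \<Longrightarrow> sq_nn_integral (\<lambda>t. c * x t) = ennreal (c\<^sup>2) * sq_nn_integral x"
  unfolding sq_nn_integral_def
  by (subst nn_integral_cmult[symmetric]) (auto simp: power_mult_distrib ennreal_mult)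

lemma sq_nn_integral_eq_0_iff:
  "x \<in> borel_measurable I01 \<Longrightarrow> sq_nn_integral x = 0 \<longleftrightarrow> (AE t in I01. x t = 0)"
  unfolding sq_nn_integral_def by (subst nn_integral_0_iff_AE) auto

lemma sq_nn_integral_equimeasurable:
  "x \<in> borel_measurable I01 \<Longrightarrow> y \<in> borel_measurable I01 \<Longrightarrow> equimeasurable x y \<Longrightarrow>
    sq_nn_integral x = sq_nn_integral y"
  unfolding sq_nn_integral_def
  using nn_integral_abs_eq_if_equimeasurable[of x y "\<lambda>u. ennreal (u\<^sup>2)"] by simp

lemma ennreal_le_if_sq_le:
  fixes A :: ennreal
  assumes "A\<^sup>2 \<le> ennreal (c\<^sup>2)" "0 \<le> c"
  shows "A \<le> ennreal c"
proof (cases A)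
  case (real r)
  then have "ennreal (r\<^sup>2) \<le> ennreal (c\<^sup>2)" using assms by (simp add: ennreal_power)
  then have "r\<^sup>2 \<le> c\<^sup>2" by (auto simp add: ennreal_le_iff2)
  then have "r \<le> c" using assms real by (simp add: abs_le_square_iff[symmetric])
  then show ?thesis using real by simp
qed (use assms in \<open>simp add: top_power_ennreal top_unique\<close>)

lemma nn_integral_abs_mult_le_L2_norm:
  assumes "x \<in> L2_space" "y \<in> L2_space"
  shows "(\<integral>\<^sup>+t. ennreal \<bar>x t\<bar> * ennreal \<bar>y t\<bar> \<partial>I01) \<le> ennreal (L2_norm x * L2_norm y)"
proof (rule ennreal_le_if_sq_le)
  have [measurable]: "x \<in> borel_measurable I01" "y \<in> borel_measurable I01"
    using assms by (auto simp: L2_space_def)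
  have sq: "(\<integral>\<^sup>+t. (ennreal \<bar>z t\<bar>)\<^sup>2 \<partial>I01) = ennreal ((L2_norm z)\<^sup>2)" if "z \<in> L2_space" for z
    using sq_nn_integral_eq[OF that] unfolding sq_nn_integral_def by (simp add: ennreal_power)
  have "(\<integral>\<^sup>+t. ennreal \<bar>x t\<bar> * ennreal \<bar>y t\<bar> \<partial>I01)\<^sup>2 \<le>
      (\<integral>\<^sup>+t. (ennreal \<bar>x t\<bar>)\<^sup>2 \<partial>I01) * (\<integral>\<^sup>+t. (ennreal \<bar>y t\<bar>)\<^sup>2 \<partial>I01)"
    by (rule Cauchy_Schwarz_nn_integral) auto
  also have "\<dots> = ennreal ((L2_norm x * L2_norm y)\<^sup>2)"
    using assms by (simp add: sq ennreal_mult[symmetric] power_mult_distrib)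
  finally show "(\<integral>\<^sup>+t. ennreal \<bar>x t\<bar> * ennreal \<bar>y t\<bar> \<partial>I01)\<^sup>2 \<le> ennreal ((L2_norm x * L2_norm y)\<^sup>2)" .
qed (simp add: L2_norm_nonneg)

lemma L2_norm_one: "L2_norm (\<lambda>t. 1) = 1"
  unfolding L2_norm_def sq_nn_integral_def by (simp add: emeasure_restrict_space)

lemma one_in_L2_space: "(\<lambda>t. 1) \<in> L2_space"
  unfolding L2_space_def sq_nn_integral_def by (simp add: emeasure_restrict_space)

lemma nn_integral_abs_le_L2_norm:
  "x \<in> L2_space \<Longrightarrow> (\<integral>\<^sup>+t. ennreal \<bar>x t\<bar> \<partial>I01) \<le> ennreal (L2_norm x)"
  using nn_integral_abs_mult_le_L2_norm[OF _ one_in_L2_space, of x] by (simp add: L2_norm_one)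

lemma sq_nn_integral_add_le:
  assumes "x \<in> L2_space" "y \<in> L2_space"
  shows "sq_nn_integral (\<lambda>t. x t + y t) \<le> ennreal ((L2_norm x + L2_norm y)\<^sup>2)"
proof -
  have [measurable]: "x \<in> borel_measurable I01" "y \<in> borel_measurable I01"
    using assms by (auto simp: L2_space_def)
  have "ennreal ((x t + y t)\<^sup>2) \<le> ennreal ((x t)\<^sup>2) + ennreal ((y t)\<^sup>2) + 2 * (ennreal \<bar>x t\<bar> * ennreal \<bar>y t\<bar>)" for t
  proof -
    have "(x t + y t)\<^sup>2 \<le> (x t)\<^sup>2 + (y t)\<^sup>2 + 2 * (\<bar>x t\<bar> * \<bar>y t\<bar>)"
      by (simp add: power2_sum abs_mult[symmetric])
    then have "ennreal ((x t + y t)\<^sup>2) \<le> ennreal ((x t)\<^sup>2 + (y t)\<^sup>2 + 2 * (\<bar>x t\<bar> * \<bar>y t\<bar>))"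
      by (rule ennreal_leI)
    also have "\<dots> = ennreal ((x t)\<^sup>2) + ennreal ((y t)\<^sup>2) + 2 * ennreal (\<bar>x t\<bar> * \<bar>y t\<bar>)"
      by (simp add: ennreal_mult')
    also have "ennreal (\<bar>x t\<bar> * \<bar>y t\<bar>) = ennreal \<bar>x t\<bar> * ennreal \<bar>y t\<bar>"
      by (rule ennreal_mult) auto
    finally show ?thesis .
  qed
  then have "sq_nn_integral (\<lambda>t. x t + y t) \<le>
      (\<integral>\<^sup>+t. ennreal ((x t)\<^sup>2) + ennreal ((y t)\<^sup>2) + 2 * (ennreal \<bar>x t\<bar> * ennreal \<bar>y t\<bar>) \<partial>I01)"
    unfolding sq_nn_integral_def by (rule nn_integral_mono)
  also have "\<dots> = sq_nn_integral x + sq_nn_integral y + 2 * (\<integral>\<^sup>+t. ennreal \<bar>x t\<bar> * ennreal \<bar>y t\<bar> \<partial>I01)"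
    unfolding sq_nn_integral_def by (simp add: nn_integral_add nn_integral_cmult)
  also have "\<dots> \<le> ennreal ((L2_norm x)\<^sup>2) + ennreal ((L2_norm y)\<^sup>2) + 2 * ennreal (L2_norm x * L2_norm y)"
    using assms by (simp add: sq_nn_integral_eq nn_integral_abs_mult_le_L2_norm mult_left_mono)
  also have "\<dots> = ennreal ((L2_norm x)\<^sup>2 + (L2_norm y)\<^sup>2 + 2 * (L2_norm x * L2_norm y))"
    by (simp add: ennreal_mult' L2_norm_nonneg)
  also have "\<dots> = ennreal ((L2_norm x + L2_norm y)\<^sup>2)"
    by (simp add: power2_sum mult.assoc)
  finally show ?thesis .
qed

lemma L2_space_add:
  assumes "x \<in> L2_space" "y \<in> L2_space"
  shows "(\<lambda>t. x t + y t) \<in> L2_space"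
proof -
  have [measurable]: "x \<in> borel_measurable I01" "y \<in> borel_measurable I01"
    using assms by (auto simp: L2_space_def)
  have "sq_nn_integral (\<lambda>t. x t + y t) < \<infinity>"
    using sq_nn_integral_add_le[OF assms] by (rule le_less_trans) simp
  then show ?thesis unfolding L2_space_def by simp
qed

lemma L2_norm_add_le:
  assumes "x \<in> L2_space" "y \<in> L2_space"
  shows "L2_norm (\<lambda>t. x t + y t) \<le> L2_norm x + L2_norm y"
proof -
  have "enn2real (sq_nn_integral (\<lambda>t. x t + y t)) \<le> (L2_norm x + L2_norm y)\<^sup>2"
    using sq_nn_integral_add_le[OF assms] by (intro enn2real_leI) auto
  then have "L2_norm (\<lambda>t. x t + y t) \<le> sqrt ((L2_norm x + L2_norm y)\<^sup>2)"
    unfolding L2_norm_def[of "\<lambda>t. x t + y t"] by (rule real_sqrt_le_mono)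
  then show ?thesis using L2_norm_nonneg[of x] L2_norm_nonneg[of y] by simp
qed

lemma L2_space_cmult: "x \<in> L2_space \<Longrightarrow> (\<lambda>t. c * x t) \<in> L2_space"
  by (auto simp: L2_space_def sq_nn_integral_cmult ennreal_mult_less_top)

lemma L2_space_diff: "x \<in> L2_space \<Longrightarrow> y \<in> L2_space \<Longrightarrow> (\<lambda>t. x t - y t) \<in> L2_space"
  using L2_space_add[of x "\<lambda>t. (-1) * y t"] L2_space_cmult[of y "-1"] by simp

lemma L2_norm_diff_commute: "L2_norm (\<lambda>t. x t - y t) = L2_norm (\<lambda>t. y t - x t)"
  unfolding L2_norm_def sq_nn_integral_def by (simp add: power2_commute)

lemma L2_norm_cmult: "x \<in> borel_measurable I01 \<Longrightarrow> L2_norm (\<lambda>t. c * x t) = \<bar>c\<bar> * L2_norm x"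
  unfolding L2_norm_def by (simp add: sq_nn_integral_cmult enn2real_mult real_sqrt_mult)

lemma L2_norm_eq_0_iff:
  assumes "x \<in> L2_space"
  shows "L2_norm x = 0 \<longleftrightarrow> (AE t in I01. x t = 0)"
proof -
  have "sq_nn_integral x < \<infinity>" using assms by (simp add: L2_space_def)
  then have "L2_norm x = 0 \<longleftrightarrow> sq_nn_integral x = 0"
    unfolding L2_norm_def by (auto simp: enn2real_eq_0_iff)
  then show ?thesis using sq_nn_integral_eq_0_iff[OF L2_space_measurable[OF assms]] by simp
qed

lemma L2_space_ideal:
  assumes "y \<in> L2_space" "x \<in> borel_measurable I01" "AE t in I01. \<bar>x t\<bar> \<le> \<bar>y t\<bar>"
  shows "x \<in> L2_space \<and> L2_norm x \<le> L2_norm y"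
proof -
  have le: "sq_nn_integral x \<le> sq_nn_integral y" by (rule sq_nn_integral_mono[OF assms(3)])
  have fin: "sq_nn_integral y < \<infinity>" using assms(1) by (simp add: L2_space_def)
  have "sq_nn_integral x < \<infinity>" by (rule le_less_trans[OF le fin])
  moreover have "enn2real (sq_nn_integral x) \<le> enn2real (sq_nn_integral y)"
    using le fin by (intro enn2real_mono) auto
  then have "L2_norm x \<le> L2_norm y" unfolding L2_norm_def by (rule real_sqrt_le_mono)
  ultimately show ?thesis using assms(2) by (simp add: L2_space_def)
qed

lemma L2_norm_indicator:
  assumes "0 \<le> s" "s \<le> 1"
  shows "L2_norm (indicator {0<..<s}) = sqrt s"
proof -
  have "sq_nn_integral (indicator {0<..<s}) = (\<integral>\<^sup>+t. indicator {0<..<s} t \<partial>I01)"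
    unfolding sq_nn_integral_def by (intro nn_integral_cong) (auto simp: indicator_def)
  also have "\<dots> = ennreal s"
  proof -
    have "{0<..<s} \<in> sets I01" by (rule sets_restrict_space_iff[THEN iffD2]) (use assms in auto)
    then show ?thesis using emeasure_I01_Ioo[OF assms] by simp
  qed
  finally show ?thesis unfolding L2_norm_def using assms by simp
qed

lemma sq_nn_integral_le_if_AE_limit:
  assumes [measurable]: "\<And>k. z k \<in> borel_measurable I01"
    and lim: "AE t in I01. (\<lambda>k. z k t) \<longlonglongrightarrow> w t"
    and le: "eventually (\<lambda>k. sq_nn_integral (z k) \<le> c) sequentially"
  shows "sq_nn_integral w \<le> c"
proof -
  have "sq_nn_integral w = (\<integral>\<^sup>+t. liminf (\<lambda>k. ennreal ((z k t)\<^sup>2)) \<partial>I01)"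
    unfolding sq_nn_integral_def using lim
  proof (intro nn_integral_cong_AE, elim eventually_mono)
    fix t assume "(\<lambda>k. z k t) \<longlonglongrightarrow> w t"
    then have "(\<lambda>k. ennreal ((z k t)\<^sup>2)) \<longlonglongrightarrow> ennreal ((w t)\<^sup>2)" by (intro tendsto_intros)
    then show "ennreal ((w t)\<^sup>2) = liminf (\<lambda>k. ennreal ((z k t)\<^sup>2))"
      by (intro lim_imp_Liminf[symmetric]) auto
  qed
  also have "\<dots> \<le> liminf (\<lambda>k. sq_nn_integral (z k))"
    unfolding sq_nn_integral_def by (rule nn_integral_liminf) measurable
  also have "\<dots> \<le> c"
    using le by (intro Liminf_le) auto
  finally show ?thesis .
qed

lemma L2_Cauchy_AE_convergent_subseq:
  fixes x :: "nat \<Rightarrow> real \<Rightarrow> real"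
  assumes xL2: "\<And>n. x n \<in> L2_space"
    and Cauchy: "\<forall>e>0. \<exists>M. \<forall>m\<ge>M. \<forall>n\<ge>M. L2_norm (\<lambda>t. x m t - x n t) < e"
  obtains r y where "strict_mono r" "y \<in> borel_measurable I01"
    "AE t in I01. (\<lambda>k. x (r k) t) \<longlonglongrightarrow> y t"
proof -
  have [measurable]: "x n \<in> borel_measurable I01" for n using xL2 by (simp add: L2_space_def)
  obtain r where r: "strict_mono r" "\<And>k. L2_norm (\<lambda>t. x (r (Suc k)) t - x (r k) t) < (1/2)^k"
    using Cauchy_fast_subsequence[of "\<lambda>m n. L2_norm (\<lambda>t. x m t - x n t)"] Cauchy by blast
  have "AE t in I01. convergent (\<lambda>k. x (r k) t)"
  proof (rule AE_convergent_if_summable_increments)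
    show "(\<integral>\<^sup>+t. ennreal \<bar>x (r (Suc k)) t - x (r k) t\<bar> \<partial>I01) \<le> ennreal ((1/2)^k)" for k
      using nn_integral_abs_le_L2_norm[OF L2_space_diff[OF xL2 xL2]] r(2)[of k]
      by (meson ennreal_leI less_imp_le order.trans)
  qed auto
  then have "AE t in I01. (\<lambda>k. x (r k) t) \<longlonglongrightarrow> lim (\<lambda>k. x (r k) t)"
    by (auto elim!: eventually_mono simp: convergent_LIMSEQ_iff)
  moreover have "(\<lambda>t. lim (\<lambda>k. x (r k) t)) \<in> borel_measurable I01" by measurable
  ultimately show ?thesis using r(1) that by blast
qed

lemma L2_space_complete:
  fixes x :: "nat \<Rightarrow> real \<Rightarrow> real"
  assumes xL2: "\<And>n. x n \<in> L2_space"
    and Cauchy: "\<forall>e>0. \<exists>M. \<forall>m\<ge>M. \<forall>n\<ge>M. L2_norm (\<lambda>t. x m t - x n t) < e"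
  shows "\<exists>y\<in>L2_space. \<forall>e>0. \<exists>M. \<forall>n\<ge>M. L2_norm (\<lambda>t. x n t - y t) \<le> e"
proof -
  obtain r y where r: "strict_mono r" and [measurable]: "y \<in> borel_measurable I01"
    and lim: "AE t in I01. (\<lambda>k. x (r k) t) \<longlonglongrightarrow> y t"
    using L2_Cauchy_AE_convergent_subseq[OF xL2 Cauchy] by blast
  have [measurable]: "x n \<in> borel_measurable I01" for n using xL2 by (simp add: L2_space_def)
  have diff: "(\<lambda>t. x m t - x n t) \<in> L2_space" for m n
    by (rule L2_space_diff[OF xL2 xL2])
  have close: "sq_nn_integral (\<lambda>t. x n t - y t) \<le> ennreal (e\<^sup>2)"
    if "0 < e" "\<forall>m\<ge>M. \<forall>n\<ge>M. L2_norm (\<lambda>t. x m t - x n t) < e" "M \<le> n" for e M n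
  proof (rule sq_nn_integral_le_if_AE_limit[of "\<lambda>k t. x n t - x (r k) t"])
    show "AE t in I01. (\<lambda>k. x n t - x (r k) t) \<longlonglongrightarrow> x n t - y t"
      using lim by (rule eventually_mono) (intro tendsto_diff tendsto_const)
    have "sq_nn_integral (\<lambda>t. x n t - x (r k) t) \<le> ennreal (e\<^sup>2)" if "M \<le> k" for k
    proof -
      have "L2_norm (\<lambda>t. x n t - x (r k) t) < e"
        using that \<open>M \<le> n\<close> seq_suble[OF r, of k] \<open>\<forall>m\<ge>M. _\<close> by auto
      then show ?thesis
        using sq_nn_integral_eq[OF diff] L2_norm_nonneg by (simp add: ennreal_leI power_mono)
    qed
    then show "eventually (\<lambda>k. sq_nn_integral (\<lambda>t. x n t - x (r k) t) \<le> ennreal (e\<^sup>2)) sequentially"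
      unfolding eventually_sequentially by blast
  qed measurable
  obtain M1 where M1: "\<forall>m\<ge>M1. \<forall>n\<ge>M1. L2_norm (\<lambda>t. x m t - x n t) < 1"
    using Cauchy zero_less_one by blast
  have "sq_nn_integral (\<lambda>t. x M1 t - y t) < \<infinity>"
    using close[OF zero_less_one M1 order.refl] by (rule le_less_trans) simp
  then have "(\<lambda>t. x M1 t - y t) \<in> L2_space" unfolding L2_space_def by simp
  from L2_space_diff[OF xL2[of M1] this] have yL2: "y \<in> L2_space" by simp
  have "L2_norm (\<lambda>t. x n t - y t) \<le> e"
    if "0 < e" "\<forall>m\<ge>M. \<forall>n\<ge>M. L2_norm (\<lambda>t. x m t - x n t) < e" "M \<le> n" for e M n
  proof -
    have "(L2_norm (\<lambda>t. x n t - y t))\<^sup>2 \<le> e\<^sup>2"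
      using close[OF that] sq_nn_integral_eq[OF L2_space_diff[OF xL2 yL2]] \<open>0 < e\<close> by simp
    then show ?thesis using \<open>0 < e\<close> L2_norm_nonneg by (simp add: power2_le_iff_abs_le)
  qed
  then show ?thesis using yL2 Cauchy by meson
qed

lemma symmetric_space_L2: "symmetric_space L2_space L2_norm"
proof (rule symmetric_spaceI)
  show "(\<lambda>t. 0) \<in> L2_space" by (simp add: L2_space_def sq_nn_integral_def)
  show "\<exists>y\<in>L2_space. (\<lambda>n. L2_norm (\<lambda>t. x n t - y t)) \<longlonglongrightarrow> 0"
    if xL2: "\<And>n. x n \<in> L2_space"
      and Cauchy: "\<forall>e>0. \<exists>M. \<forall>m\<ge>M. \<forall>n\<ge>M. L2_norm (\<lambda>t. x m t - x n t) < e" for x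
  proof -
    obtain y where y: "y \<in> L2_space" "\<forall>e>0. \<exists>M. \<forall>n\<ge>M. L2_norm (\<lambda>t. x n t - y t) \<le> e"
      using L2_space_complete[OF xL2 Cauchy] by blast
    show ?thesis using y(1) LIMSEQ_zero_if_eventually_le[OF L2_norm_nonneg y(2)] by blast
  qed
  show "x \<in> L2_space \<and> L2_norm x = L2_norm y"
    if "y \<in> L2_space" "x \<in> borel_measurable I01" "equimeasurable x y" for x y
    using that sq_nn_integral_equimeasurable[OF that(2) L2_space_measurable that(3)]
    by (simp add: L2_space_def L2_norm_def)
  show "L2_space \<subseteq> borel_measurable I01" using L2_space_measurable by blast
  show "L2_norm (\<lambda>t. c * x t) = \<bar>c\<bar> * L2_norm x" if "x \<in> L2_space" for x c
    using L2_norm_cmult[OF L2_space_measurable[OF that]] .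
  show "0 \<le> L2_norm x" for x by (rule L2_norm_nonneg)
  show "L2_norm x = 0 \<longleftrightarrow> (AE t in I01. x t = 0)" if "x \<in> L2_space" for x
    using that by (rule L2_norm_eq_0_iff)
  show "x \<in> L2_space \<and> L2_norm x \<le> L2_norm y"
    if "y \<in> L2_space" "x \<in> borel_measurable I01" "AE t in I01. \<bar>x t\<bar> \<le> \<bar>y t\<bar>" for x y
    using that by (rule L2_space_ideal)
qed (fact L2_space_add L2_norm_add_le L2_space_cmult)+

section \<open>The intersection of $L^2$ with a Marcinkiewicz space\<close>

definition L2_marcinkiewicz_space :: "(real \<Rightarrow> real) \<Rightarrow> (real \<Rightarrow> real) set" where
  "L2_marcinkiewicz_space \<phi> = {x \<in> L2_space. marcinkiewicz_norm \<phi> x < \<infinity>}"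

definition L2_marcinkiewicz_norm :: "(real \<Rightarrow> real) \<Rightarrow> (real \<Rightarrow> real) \<Rightarrow> real" where
  "L2_marcinkiewicz_norm \<phi> x = L2_norm x + enn2real (marcinkiewicz_norm \<phi> x)"

lemma L2_marcinkiewicz_space_subset: "L2_marcinkiewicz_space \<phi> \<subseteq> L2_space"
  by (auto simp: L2_marcinkiewicz_space_def)

lemma L2_marcinkiewicz_space_measurable:
  "x \<in> L2_marcinkiewicz_space \<phi> \<Longrightarrow> x \<in> borel_measurable I01"
  by (simp add: L2_marcinkiewicz_space_def L2_space_def)

lemma L2_norm_le_L2_marcinkiewicz_norm: "L2_norm x \<le> L2_marcinkiewicz_norm \<phi> x"
  by (simp add: L2_marcinkiewicz_norm_def)

lemma L2_marcinkiewicz_norm_nonneg: "0 \<le> L2_marcinkiewicz_norm \<phi> x"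
  by (simp add: L2_marcinkiewicz_norm_def L2_norm_nonneg)

lemma L2_marcinkiewicz_space_add:
  assumes "x \<in> L2_marcinkiewicz_space \<phi>" "y \<in> L2_marcinkiewicz_space \<phi>"
  shows "(\<lambda>t. x t + y t) \<in> L2_marcinkiewicz_space \<phi>"
proof -
  have "marcinkiewicz_norm \<phi> x + marcinkiewicz_norm \<phi> y < \<infinity>"
    using assms by (simp add: L2_marcinkiewicz_space_def)
  with marcinkiewicz_norm_add[OF assms[THEN L2_marcinkiewicz_space_measurable]]
  have "marcinkiewicz_norm \<phi> (\<lambda>t. x t + y t) < \<infinity>" by (rule le_less_trans)
  then show ?thesis using assms by (simp add: L2_marcinkiewicz_space_def L2_space_add)
qed

lemma L2_marcinkiewicz_norm_add_le:
  assumes "x \<in> L2_marcinkiewicz_space \<phi>" "y \<in> L2_marcinkiewicz_space \<phi>"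
  shows "L2_marcinkiewicz_norm \<phi> (\<lambda>t. x t + y t) \<le>
    L2_marcinkiewicz_norm \<phi> x + L2_marcinkiewicz_norm \<phi> y"
proof -
  have "L2_norm (\<lambda>t. x t + y t) \<le> L2_norm x + L2_norm y"
    using assms L2_marcinkiewicz_space_subset by (intro L2_norm_add_le) auto
  have fin: "marcinkiewicz_norm \<phi> x < \<infinity>" "marcinkiewicz_norm \<phi> y < \<infinity>"
    using assms by (auto simp: L2_marcinkiewicz_space_def)
  have "enn2real (marcinkiewicz_norm \<phi> (\<lambda>t. x t + y t)) \<le>
      enn2real (marcinkiewicz_norm \<phi> x + marcinkiewicz_norm \<phi> y)"
    using fin marcinkiewicz_norm_add[OF assms[THEN L2_marcinkiewicz_space_measurable]]
    by (intro enn2real_mono) auto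
  also have "\<dots> = enn2real (marcinkiewicz_norm \<phi> x) + enn2real (marcinkiewicz_norm \<phi> y)"
    using fin by (intro enn2real_plus) auto
  finally show ?thesis
    using \<open>L2_norm (\<lambda>t. x t + y t) \<le> _\<close> unfolding L2_marcinkiewicz_norm_def by linarith
qed

lemma L2_marcinkiewicz_space_cmult:
  assumes "x \<in> L2_marcinkiewicz_space \<phi>"
  shows "(\<lambda>t. c * x t) \<in> L2_marcinkiewicz_space \<phi>"
proof -
  have "marcinkiewicz_norm \<phi> x < \<infinity>" using assms by (simp add: L2_marcinkiewicz_space_def)
  then have "marcinkiewicz_norm \<phi> (\<lambda>t. c * x t) < \<infinity>"
    using marcinkiewicz_norm_cmult[OF L2_marcinkiewicz_space_measurable[OF assms]]
    by (simp add: ennreal_mult_less_top)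
  then show ?thesis
    using assms L2_space_cmult by (simp add: L2_marcinkiewicz_space_def)
qed

lemma L2_marcinkiewicz_norm_cmult:
  "x \<in> L2_marcinkiewicz_space \<phi> \<Longrightarrow>
    L2_marcinkiewicz_norm \<phi> (\<lambda>t. c * x t) = \<bar>c\<bar> * L2_marcinkiewicz_norm \<phi> x"
  using L2_marcinkiewicz_space_measurable[of x \<phi>]
  by (simp add: L2_marcinkiewicz_norm_def L2_norm_cmult marcinkiewicz_norm_cmult enn2real_mult
      distrib_left)

lemma L2_marcinkiewicz_space_diff:
  "x \<in> L2_marcinkiewicz_space \<phi> \<Longrightarrow> y \<in> L2_marcinkiewicz_space \<phi> \<Longrightarrow>
    (\<lambda>t. x t - y t) \<in> L2_marcinkiewicz_space \<phi>"
  using L2_marcinkiewicz_space_add[of x \<phi> "\<lambda>t. (-1) * y t"] L2_marcinkiewicz_space_cmult[of y \<phi> "-1"]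
  by simp

lemma L2_marcinkiewicz_space_ideal:
  assumes "y \<in> L2_marcinkiewicz_space \<phi>" "x \<in> borel_measurable I01" "AE t in I01. \<bar>x t\<bar> \<le> \<bar>y t\<bar>"
  shows "x \<in> L2_marcinkiewicz_space \<phi> \<and> L2_marcinkiewicz_norm \<phi> x \<le> L2_marcinkiewicz_norm \<phi> y"
proof -
  have L2: "x \<in> L2_space \<and> L2_norm x \<le> L2_norm y"
    using assms L2_marcinkiewicz_space_subset by (intro L2_space_ideal) auto
  have le: "marcinkiewicz_norm \<phi> x \<le> marcinkiewicz_norm \<phi> y"
    using assms(3) by (rule marcinkiewicz_norm_mono)
  moreover have fin: "marcinkiewicz_norm \<phi> y < \<infinity>"
    using assms(1) by (simp add: L2_marcinkiewicz_space_def)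
  ultimately have "marcinkiewicz_norm \<phi> x < \<infinity>" by (rule le_less_trans)
  moreover have "enn2real (marcinkiewicz_norm \<phi> x) \<le> enn2real (marcinkiewicz_norm \<phi> y)"
    using le fin by (intro enn2real_mono) auto
  ultimately show ?thesis
    using L2 by (simp add: L2_marcinkiewicz_space_def L2_marcinkiewicz_norm_def)
qed

lemma L2_marcinkiewicz_norm_eq_0_iff:
  assumes "x \<in> L2_marcinkiewicz_space \<phi>"
  shows "L2_marcinkiewicz_norm \<phi> x = 0 \<longleftrightarrow> (AE t in I01. x t = 0)"
proof
  have xL2: "x \<in> L2_space" using assms L2_marcinkiewicz_space_subset by blast
  show "AE t in I01. x t = 0" if "L2_marcinkiewicz_norm \<phi> x = 0"
  proof -
    have "L2_norm x = 0"
      using that L2_norm_nonneg[of x] enn2real_nonneg[of "marcinkiewicz_norm \<phi> x"]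
      unfolding L2_marcinkiewicz_norm_def by linarith
    then show ?thesis using L2_norm_eq_0_iff[OF xL2] by simp
  qed
  show "L2_marcinkiewicz_norm \<phi> x = 0" if "AE t in I01. x t = 0"
    using that L2_norm_eq_0_iff[OF xL2] marcinkiewicz_norm_AE_zero[OF that]
    by (simp add: L2_marcinkiewicz_norm_def)
qed

lemma K_functional_le_add_L2_norm:
  assumes "x \<in> L2_space" "y \<in> L2_space" "0 \<le> t"
  shows "K_functional t y \<le> K_functional t x + ennreal (L2_norm (\<lambda>s. y s - x s))"
proof -
  have [measurable]: "x \<in> borel_measurable I01" "y \<in> borel_measurable I01"
    using assms by (auto simp: L2_space_def)
  have "K_functional t y \<le> K_functional t x + K_functional t (\<lambda>s. y s - x s)"
    using K_functional_add[of x "\<lambda>s. y s - x s" t] assms(3) by simp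
  also have "K_functional t (\<lambda>s. y s - x s) \<le> (\<integral>\<^sup>+s. ennreal \<bar>y s - x s\<bar> \<partial>I01)"
    by (rule K_functional_le_L1)
  also have "\<dots> \<le> ennreal (L2_norm (\<lambda>s. y s - x s))"
    using assms by (intro nn_integral_abs_le_L2_norm L2_space_diff)
  finally show ?thesis by simp
qed

lemma marcinkiewicz_norm_le_if_L2_limit:
  fixes x :: "nat \<Rightarrow> real \<Rightarrow> real"
  assumes xL2: "\<And>m. x m \<in> L2_space" and yL2: "y \<in> L2_space"
    and lim: "\<forall>e>0. \<exists>M. \<forall>m\<ge>M. L2_norm (\<lambda>t. x m t - y t) \<le> e"
    and le: "\<forall>m\<ge>M. marcinkiewicz_norm \<phi> (x m) \<le> c"
  shows "marcinkiewicz_norm \<phi> y \<le> c"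
  unfolding marcinkiewicz_norm_def
proof (rule SUP_least)
  fix t :: real assume t: "t \<in> {0<..1}"
  define w where "w = \<phi> t / t"
  show "ennreal w * K_functional t y \<le> c"
  proof (rule ennreal_le_epsilon)
    fix \<delta> :: real assume "0 < \<delta>"
    then have q: "0 < \<delta> / (\<bar>w\<bar> + 1)" by simp
    obtain M' where M': "\<forall>m\<ge>M'. L2_norm (\<lambda>s. x m s - y s) \<le> \<delta> / (\<bar>w\<bar> + 1)"
      using lim[rule_format, OF q] by blast
    define m where "m = max M M'"
    have "ennreal w * K_functional t y \<le>
        ennreal w * K_functional t (x m) + ennreal w * ennreal (L2_norm (\<lambda>s. x m s - y s))"
      using K_functional_le_add_L2_norm[OF xL2 yL2, of t m] t
      by (simp add: mult_left_mono L2_norm_diff_commute[of y] flip: distrib_left)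
    also have "\<dots> \<le> c + ennreal \<delta>"
    proof (rule add_mono)
      show "ennreal w * K_functional t (x m) \<le> c"
        using marcinkiewicz_norm_ge[OF t, of \<phi> "x m"] le[rule_format, of m]
        unfolding w_def m_def by simp
      have "w * L2_norm (\<lambda>s. x m s - y s) \<le> (\<bar>w\<bar> + 1) * L2_norm (\<lambda>s. x m s - y s)"
        using L2_norm_nonneg by (intro mult_right_mono) auto
      also have "\<dots> \<le> (\<bar>w\<bar> + 1) * (\<delta> / (\<bar>w\<bar> + 1))"
        using M' by (intro mult_left_mono) (auto simp: m_def)
      also have "\<dots> = \<delta>" by simp
      finally show "ennreal w * ennreal (L2_norm (\<lambda>s. x m s - y s)) \<le> ennreal \<delta>"
        using L2_norm_nonneg
        by (simp add: ennreal_mult''[symmetric] ennreal_leI del: ennreal_mult' ennreal_mult'')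
    qed
    finally show "ennreal w * K_functional t y \<le> c + ennreal \<delta>" .
  qed
qed

lemma marcinkiewicz_norm_le_if_L2_marcinkiewicz_norm_le:
  assumes "x \<in> L2_marcinkiewicz_space \<phi>" "L2_marcinkiewicz_norm \<phi> x \<le> e"
  shows "marcinkiewicz_norm \<phi> x \<le> ennreal e"
proof (rule enn2real_le)
  show "enn2real (marcinkiewicz_norm \<phi> x) \<le> e"
    using assms(2) L2_norm_nonneg[of x] unfolding L2_marcinkiewicz_norm_def by linarith
  show "marcinkiewicz_norm \<phi> x \<noteq> top"
    using assms(1) by (simp add: L2_marcinkiewicz_space_def less_top)
qed

lemma marcinkiewicz_norm_diff_le_if_Cauchy:
  fixes x :: "nat \<Rightarrow> real \<Rightarrow> real"
  assumes xE: "\<And>n. x n \<in> L2_marcinkiewicz_space \<phi>" and yL2: "y \<in> L2_space"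
    and lim: "\<forall>e>0. \<exists>M. \<forall>n\<ge>M. L2_norm (\<lambda>t. x n t - y t) \<le> e"
    and Cauchy: "\<forall>m\<ge>M. \<forall>n\<ge>M. L2_marcinkiewicz_norm \<phi> (\<lambda>t. x m t - x n t) < e" and "M \<le> n"
  shows "marcinkiewicz_norm \<phi> (\<lambda>t. x n t - y t) \<le> ennreal e"
proof (rule marcinkiewicz_norm_le_if_L2_limit[where x="\<lambda>m t. x n t - x m t" and M=M])
  have xL2: "x m \<in> L2_space" for m using xE L2_marcinkiewicz_space_subset by blast
  show "(\<lambda>t. x n t - x m t) \<in> L2_space" for m using xL2 xL2 by (rule L2_space_diff)
  show "(\<lambda>t. x n t - y t) \<in> L2_space" using xL2 yL2 by (rule L2_space_diff)
  have "(\<lambda>t. x n t - x m t - (x n t - y t)) = (\<lambda>t. y t - x m t)" for m by auto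
  then show "\<forall>e>0. \<exists>M. \<forall>m\<ge>M. L2_norm (\<lambda>t. x n t - x m t - (x n t - y t)) \<le> e"
    using lim by (simp add: L2_norm_diff_commute[of y])
  show "\<forall>m\<ge>M. marcinkiewicz_norm \<phi> (\<lambda>t. x n t - x m t) \<le> ennreal e"
  proof (intro allI impI)
    fix m assume "M \<le> m"
    show "marcinkiewicz_norm \<phi> (\<lambda>t. x n t - x m t) \<le> ennreal e"
      using Cauchy[rule_format, OF \<open>M \<le> n\<close> \<open>M \<le> m\<close>]
      by (intro marcinkiewicz_norm_le_if_L2_marcinkiewicz_norm_le L2_marcinkiewicz_space_diff xE) simp
  qed
qed

lemma L2_limit_in_L2_marcinkiewicz_space:
  fixes x :: "nat \<Rightarrow> real \<Rightarrow> real"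
  assumes xE: "\<And>n. x n \<in> L2_marcinkiewicz_space \<phi>" and yL2: "y \<in> L2_space"
    and lim: "\<forall>e>0. \<exists>M. \<forall>n\<ge>M. L2_norm (\<lambda>t. x n t - y t) \<le> e"
    and Cauchy: "\<forall>e>0. \<exists>M. \<forall>m\<ge>M. \<forall>n\<ge>M. L2_marcinkiewicz_norm \<phi> (\<lambda>t. x m t - x n t) < e"
  shows "y \<in> L2_marcinkiewicz_space \<phi>"
proof -
  obtain M where M: "\<forall>m\<ge>M. \<forall>n\<ge>M. L2_marcinkiewicz_norm \<phi> (\<lambda>t. x m t - x n t) < 1"
    using Cauchy[rule_format, OF zero_less_one] by blast
  have "marcinkiewicz_norm \<phi> (\<lambda>t. x M t - (x M t - y t)) \<le>
      marcinkiewicz_norm \<phi> (x M) + marcinkiewicz_norm \<phi> (\<lambda>t. x M t - y t)"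
  proof (rule marcinkiewicz_norm_diff)
    show "x M \<in> borel_measurable I01" by (rule L2_marcinkiewicz_space_measurable[OF xE])
    show "(\<lambda>t. x M t - y t) \<in> borel_measurable I01"
      using xE L2_marcinkiewicz_space_subset
      by (intro L2_space_measurable L2_space_diff yL2) blast
  qed
  also have "\<dots> < \<infinity>"
    using xE[of M] le_less_trans[OF marcinkiewicz_norm_diff_le_if_Cauchy[OF xE yL2 lim M order.refl]]
    by (simp add: L2_marcinkiewicz_space_def)
  finally show ?thesis using yL2 by (simp add: L2_marcinkiewicz_space_def)
qed

lemma L2_marcinkiewicz_space_complete:
  fixes x :: "nat \<Rightarrow> real \<Rightarrow> real"
  assumes xE: "\<And>n. x n \<in> L2_marcinkiewicz_space \<phi>"
    and Cauchy: "\<forall>e>0. \<exists>M. \<forall>m\<ge>M. \<forall>n\<ge>M. L2_marcinkiewicz_norm \<phi> (\<lambda>t. x m t - x n t) < e"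
  shows "\<exists>y\<in>L2_marcinkiewicz_space \<phi>. (\<lambda>n. L2_marcinkiewicz_norm \<phi> (\<lambda>t. x n t - y t)) \<longlonglongrightarrow> 0"
proof -
  have xL2: "x n \<in> L2_space" for n using xE L2_marcinkiewicz_space_subset by blast
  have "\<forall>e>0. \<exists>M. \<forall>m\<ge>M. \<forall>n\<ge>M. L2_norm (\<lambda>t. x m t - x n t) < e"
    using L2_norm_le_L2_marcinkiewicz_norm Cauchy by (rule Cauchy_if_norm_le)
  from L2_space_complete[OF xL2 this] obtain y where
    yL2: "y \<in> L2_space" and lim: "\<forall>e>0. \<exists>M. \<forall>n\<ge>M. L2_norm (\<lambda>t. x n t - y t) \<le> e"
    by blast
  have yE: "y \<in> L2_marcinkiewicz_space \<phi>"
    using xE yL2 lim Cauchy by (rule L2_limit_in_L2_marcinkiewicz_space)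
  note tail = marcinkiewicz_norm_diff_le_if_Cauchy[OF xE yL2 lim]
  have close: "L2_marcinkiewicz_norm \<phi> (\<lambda>t. x n t - y t) \<le> e"
    if "0 < e" "\<forall>m\<ge>M. \<forall>n\<ge>M. L2_marcinkiewicz_norm \<phi> (\<lambda>t. x m t - x n t) < e / 2"
      "\<forall>n\<ge>M'. L2_norm (\<lambda>t. x n t - y t) \<le> e / 2" "max M M' \<le> n" for e M M' n
  proof -
    have "enn2real (marcinkiewicz_norm \<phi> (\<lambda>t. x n t - y t)) \<le> e / 2"
      using tail[OF that(2), of n] that(1,4) by (intro enn2real_leI) simp_all
    moreover have "L2_norm (\<lambda>t. x n t - y t) \<le> e / 2" using that(3,4) by simp
    ultimately show ?thesis unfolding L2_marcinkiewicz_norm_def by linarith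
  qed
  have "\<forall>e>0. \<exists>M. \<forall>n\<ge>M. L2_marcinkiewicz_norm \<phi> (\<lambda>t. x n t - y t) \<le> e"
  proof (intro allI impI)
    fix e :: real assume "0 < e"
    then have "0 < e / 2" by simp
    obtain M where "\<forall>m\<ge>M. \<forall>n\<ge>M. L2_marcinkiewicz_norm \<phi> (\<lambda>t. x m t - x n t) < e / 2"
      using Cauchy[rule_format, OF \<open>0 < e / 2\<close>] by blast
    moreover obtain M' where "\<forall>n\<ge>M'. L2_norm (\<lambda>t. x n t - y t) \<le> e / 2"
      using lim[rule_format, OF \<open>0 < e / 2\<close>] by blast
    ultimately show "\<exists>M. \<forall>n\<ge>M. L2_marcinkiewicz_norm \<phi> (\<lambda>t. x n t - y t) \<le> e"
      using close[OF \<open>0 < e\<close>] by blast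
  qed
  from LIMSEQ_zero_if_eventually_le[OF L2_marcinkiewicz_norm_nonneg this] show ?thesis
    using yE by blast
qed

theorem symmetric_space_L2_marcinkiewicz:
  "symmetric_space (L2_marcinkiewicz_space \<phi>) (L2_marcinkiewicz_norm \<phi>)"
proof (rule symmetric_spaceI)
  show "L2_marcinkiewicz_space \<phi> \<subseteq> borel_measurable I01"
    using L2_marcinkiewicz_space_measurable by blast
  show "(\<lambda>t. 0) \<in> L2_marcinkiewicz_space \<phi>"
    using symmetric_space_zero[OF symmetric_space_L2] marcinkiewicz_norm_AE_zero[of "\<lambda>t. 0" \<phi>]
    by (simp add: L2_marcinkiewicz_space_def)
  show "0 \<le> L2_marcinkiewicz_norm \<phi> x" for x by (rule L2_marcinkiewicz_norm_nonneg)
  show "\<exists>y\<in>L2_marcinkiewicz_space \<phi>. (\<lambda>n. L2_marcinkiewicz_norm \<phi> (\<lambda>t. x n t - y t)) \<longlonglongrightarrow> 0"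
    if "\<And>n. x n \<in> L2_marcinkiewicz_space \<phi>"
      "\<forall>e>0. \<exists>M. \<forall>m\<ge>M. \<forall>n\<ge>M. L2_marcinkiewicz_norm \<phi> (\<lambda>t. x m t - x n t) < e" for x
    using that by (rule L2_marcinkiewicz_space_complete)
  show "x \<in> L2_marcinkiewicz_space \<phi> \<and> L2_marcinkiewicz_norm \<phi> x \<le> L2_marcinkiewicz_norm \<phi> y"
    if "y \<in> L2_marcinkiewicz_space \<phi>" "x \<in> borel_measurable I01" "AE t in I01. \<bar>x t\<bar> \<le> \<bar>y t\<bar>"
    for x y
    using that by (rule L2_marcinkiewicz_space_ideal)
  show "x \<in> L2_marcinkiewicz_space \<phi> \<and> L2_marcinkiewicz_norm \<phi> x = L2_marcinkiewicz_norm \<phi> y"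
    if y: "y \<in> L2_marcinkiewicz_space \<phi>" and x: "x \<in> borel_measurable I01"
      and eq: "equimeasurable x y" for x y
  proof -
    have "y \<in> L2_space" using y L2_marcinkiewicz_space_subset by blast
    then have "x \<in> L2_space \<and> L2_norm x = L2_norm y"
      using symmetric_space_L2 x eq unfolding symmetric_space_def equimeasurable_def by blast
    moreover have "marcinkiewicz_norm \<phi> x = marcinkiewicz_norm \<phi> y"
      using marcinkiewicz_norm_equimeasurable[OF x L2_marcinkiewicz_space_measurable[OF y] eq] .
    ultimately show ?thesis
      using y by (simp add: L2_marcinkiewicz_space_def L2_marcinkiewicz_norm_def)
  qed
  show "L2_marcinkiewicz_norm \<phi> x = 0 \<longleftrightarrow> (AE t in I01. x t = 0)"
    if "x \<in> L2_marcinkiewicz_space \<phi>" for x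
    using that by (rule L2_marcinkiewicz_norm_eq_0_iff)
  show "L2_marcinkiewicz_norm \<phi> (\<lambda>t. c * x t) = \<bar>c\<bar> * L2_marcinkiewicz_norm \<phi> x"
    if "x \<in> L2_marcinkiewicz_space \<phi>" for x c
    using that by (rule L2_marcinkiewicz_norm_cmult)
qed (fact L2_marcinkiewicz_space_add L2_marcinkiewicz_norm_add_le L2_marcinkiewicz_space_cmult)+

lemma fund_fun_L2_marcinkiewicz:
  assumes t: "0 < t" "t \<le> 1"
    and pos: "\<And>t. t \<in> {0<..1} \<Longrightarrow> 0 < \<phi> t" and mono: "mono_on {0<..1} \<phi>"
    and quot_anti: "\<And>t u. 0 < t \<Longrightarrow> t \<le> u \<Longrightarrow> u \<le> 1 \<Longrightarrow> \<phi> u / u \<le> \<phi> t / t"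
  shows "fund_fun (L2_marcinkiewicz_norm \<phi>) t = sqrt t + \<phi> t"
  using marcinkiewicz_norm_indicator[OF t pos mono quot_anti] L2_norm_indicator[of t] t pos[of t]
  by (simp add: fund_fun_def L2_marcinkiewicz_norm_def)

section \<open>The weight $\varphi(t) = \sqrt{t (2 - \ln t)}$\<close>

lemma in_G_cong:
  assumes eq: "\<And>t. t \<in> {0<..1} \<Longrightarrow> f t = g t" and g: "in_G g"
  shows "in_G f"
  unfolding in_G_def
proof (intro conjI ballI)
  fix t :: real assume "t \<in> {0<..1}" then show "f t > 0" using g eq by (auto simp: in_G_def)
next
  show "mono_on {0<..1} f" using g eq unfolding in_G_def mono_on_def by auto
next
  have cg: "concave_on {0<..1} g" using g by (simp add: in_G_def)
  have cvx: "convex ({0<..1}::real set)" by (rule convex_real_interval)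
  show "concave_on {0<..1} f"
    unfolding concave_on_iff
  proof (intro conjI ballI allI impI)
    show "convex ({0<..1}::real set)" by (rule cvx)
    fix x y u v :: real assume xy: "x \<in> {0<..1}" "y \<in> {0<..1}" and uv: "u \<ge> 0" "v \<ge> 0" "u + v = 1"
    have m: "u *\<^sub>R x + v *\<^sub>R y \<in> {0<..1}" using cvx xy uv unfolding convex_def by blast
    have "u * g x + v * g y \<le> g (u *\<^sub>R x + v *\<^sub>R y)"
      using cg xy uv unfolding concave_on_iff by blast
    then show "u * f x + v * f y \<le> f (u *\<^sub>R x + v *\<^sub>R y)" using eq xy m by simp
  qed
qed

lemma concave_on_sqrt_comp:
  fixes h :: "real \<Rightarrow> real"
  assumes c: "concave_on S h" and nonneg: "\<And>x. x \<in> S \<Longrightarrow> 0 \<le> h x"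
  shows "concave_on S (\<lambda>x. sqrt (h x))"
  unfolding concave_on_iff
proof (intro conjI ballI allI impI)
  show "convex S" using c by (rule concave_on_imp_convex)
  fix x y u v :: real assume xy: "x \<in> S" "y \<in> S" and uv: "u \<ge> 0" "v \<ge> 0" "u + v = 1"
  define a where "a = sqrt (h x)"
  define b where "b = sqrt (h y)"
  have ab: "a \<ge> 0" "b \<ge> 0" "a\<^sup>2 = h x" "b\<^sup>2 = h y" using nonneg xy by (auto simp: a_def b_def)
  have "(u * a + v * b)\<^sup>2 \<le> u * a\<^sup>2 + v * b\<^sup>2"
  proof -
    have v: "v = 1 - u" using uv(3) by simp
    have "u * a\<^sup>2 + v * b\<^sup>2 - (u * a + v * b)\<^sup>2 = u * v * (a - b)\<^sup>2"
      unfolding v by (simp add: power2_eq_square algebra_simps)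
    also have "\<dots> \<ge> 0" using uv by simp
    finally show ?thesis by simp
  qed
  also have "\<dots> = u * h x + v * h y" using ab by simp
  also have "\<dots> \<le> h (u *\<^sub>R x + v *\<^sub>R y)" using c xy uv unfolding concave_on_iff by blast
  finally have "u * a + v * b \<le> sqrt (h (u *\<^sub>R x + v *\<^sub>R y))" by (rule real_le_rsqrt)
  then show "u * sqrt (h x) + v * sqrt (h y) \<le> sqrt (h (u *\<^sub>R x + v *\<^sub>R y))" by (simp add: a_def b_def)
qed

lemma in_G_sqrt: "in_G sqrt"
  unfolding in_G_def
proof (intro conjI ballI)
  show "mono_on {0<..1} sqrt" by (auto simp: mono_on_def)
  have "concave_on {0<..1} (\<lambda>x::real. sqrt x)"
    by (rule concave_on_sqrt_comp[where h="\<lambda>x. x"]) (auto simp: concave_on_ident convex_real_interval)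
  then show "concave_on {0<..1} sqrt" by simp
qed simp

definition phi_log :: "real \<Rightarrow> real" where
  "phi_log t = sqrt (t * (2 - ln t))"

lemma two_minus_ln_pos: "0 < t \<Longrightarrow> t \<le> 1 \<Longrightarrow> 0 < 2 - ln (t::real)"
  using ln_le_zero_iff[of t] by linarith

lemma phi_log_pos: "0 < t \<Longrightarrow> t \<le> 1 \<Longrightarrow> 0 < phi_log t"
  unfolding phi_log_def using two_minus_ln_pos by simp

lemma phi_log_mono:
  assumes "0 < s" "s \<le> t" "t \<le> 1"
  shows "phi_log s \<le> phi_log t"
proof -
  have "ln (t / s) \<le> t / s - 1" using assms by (intro ln_le_minus_one) auto
  then have "s * (ln t - ln s) \<le> t - s" using assms by (simp add: ln_div field_simps)
  moreover have "(t - s) * ln t \<le> 0" using assms by (intro mult_nonneg_nonpos) auto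
  ultimately have "s * (2 - ln s) \<le> t * (2 - ln t)" using assms by (simp add: algebra_simps)
  then show ?thesis unfolding phi_log_def by simp
qed

lemma phi_log_div_antimono:
  assumes "0 < s" "s \<le> t" "t \<le> 1"
  shows "phi_log t / t \<le> phi_log s / s"
proof -
  have eq: "phi_log u / u = sqrt ((2 - ln u) / u)" if "0 < u" for u
  proof -
    have "sqrt ((2 - ln u) / u) = sqrt (u * (2 - ln u) / u\<^sup>2)"
      using that by (simp add: power2_eq_square)
    also have "\<dots> = phi_log u / u" using that by (simp add: phi_log_def real_sqrt_divide)
    finally show ?thesis by simp
  qed
  have "(2 - ln t) / t \<le> (2 - ln s) / s"
    using assms two_minus_ln_pos[of s] by (intro frac_le) auto
  then show ?thesis using assms eq by simp
qed

lemma concave_on_phi_log: "concave_on {0<..1} phi_log"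
proof -
  have "concave_on {0<..1} (\<lambda>t::real. t * (2 - ln t))"
  proof (rule f''_le0_imp_concave)
    fix x :: real assume x: "x \<in> {0<..1}"
    show "((\<lambda>t. t * (2 - ln t)) has_real_derivative 1 - ln x) (at x)"
      using x by (auto intro!: derivative_eq_intros)
    show "((\<lambda>t. 1 - ln t) has_real_derivative - 1 / x) (at x)"
      using x by (auto intro!: derivative_eq_intros)
    show "- 1 / x \<le> 0" using x by simp
  qed (rule convex_real_interval)
  then show ?thesis
    unfolding phi_log_def[abs_def] using two_minus_ln_pos
    by (intro concave_on_sqrt_comp) (auto intro: less_imp_le)
qed

lemma in_G_sqrt_add_phi_log: "in_G (\<lambda>t. sqrt t + phi_log t)"
  unfolding in_G_def
proof (intro conjI ballI)
  show "0 < sqrt t + phi_log t" if "t \<in> {0<..1}" for t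
    using that phi_log_pos[of t] by (simp add: add_pos_pos)
  show "mono_on {0<..1} (\<lambda>t. sqrt t + phi_log t)"
    unfolding mono_on_def using phi_log_mono by (auto intro!: add_mono)
  show "concave_on {0<..1} (\<lambda>t. sqrt t + phi_log t)"
    using in_G_sqrt concave_on_phi_log by (intro concave_on_add) (auto simp: in_G_def)
qed

lemma fund_fun_L2_marcinkiewicz_phi_log:
  "t \<in> {0<..1} \<Longrightarrow> fund_fun (L2_marcinkiewicz_norm phi_log) t = sqrt t + phi_log t"
  using phi_log_pos phi_log_div_antimono
  by (intro fund_fun_L2_marcinkiewicz) (auto simp: mono_on_def intro: phi_log_mono)

lemma fund_fun_L2: "t \<in> {0<..1} \<Longrightarrow> fund_fun L2_norm t = sqrt t"
  unfolding fund_fun_def by (rule L2_norm_indicator) auto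

lemma fund_fun_ratio_tendsto_zero:
  "((\<lambda>t. fund_fun L2_norm t / fund_fun (L2_marcinkiewicz_norm phi_log) t) \<longlongrightarrow> 0) (at_right 0)"
proof -
  have "((\<lambda>t::real. sqrt t / (sqrt t + sqrt (t * (2 - ln t)))) \<longlongrightarrow> 0) (at_right 0)"
    by real_asymp
  moreover have "eventually (\<lambda>t. sqrt t / (sqrt t + sqrt (t * (2 - ln t))) =
      fund_fun L2_norm t / fund_fun (L2_marcinkiewicz_norm phi_log) t) (at_right 0)"
    unfolding eventually_at_right_field
    by (intro exI[of _ 1]) (auto simp: fund_fun_L2 fund_fun_L2_marcinkiewicz_phi_log phi_log_def)
  ultimately show ?thesis by (rule Lim_transform_eventually)
qed

section \<open>Normalised blocks of $1/\varphi$\<close>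

lemma borel_measurable_phi_log[measurable]: "phi_log \<in> borel_measurable I01"
  unfolding phi_log_def[abs_def] by measurable

lemma recip_phi_log_sq: "0 < s \<Longrightarrow> s \<le> 1 \<Longrightarrow> (1 / phi_log s)\<^sup>2 = 1 / (s * (2 - ln s))"
  using two_minus_ln_pos[of s] by (simp add: phi_log_def power_divide)

lemma nn_integral_recip_phi_log_sq:
  assumes "0 < a" "a \<le> b" "b \<le> 1"
  shows "(\<integral>\<^sup>+s. ennreal ((1 / phi_log s)\<^sup>2) * indicator {a<..b} s \<partial>I01) =
    ennreal (ln (2 - ln a) - ln (2 - ln b))"
proof -
  have "(\<integral>\<^sup>+s. ennreal ((1 / phi_log s)\<^sup>2) * indicator {a<..b} s \<partial>I01) =
      (\<integral>\<^sup>+s. ennreal (1 / (s * (2 - ln s))) * indicator {a<..b} s \<partial>I01)"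
    using assms by (intro nn_integral_cong) (auto simp: indicator_def recip_phi_log_sq)
  also have "\<dots> = ennreal (- ln (2 - ln b) - - ln (2 - ln a))"
  proof (rule nn_integral_I01_Ioc_FTC)
    fix s assume s: "s \<in> {a..b}"
    then have "0 < s" "0 < 2 - ln s" using assms two_minus_ln_pos[of s] by auto
    then show "((\<lambda>s. - ln (2 - ln s)) has_real_derivative 1 / (s * (2 - ln s))) (at s)"
      by (auto intro!: derivative_eq_intros simp: field_simps)
    show "0 \<le> 1 / (s * (2 - ln s))" using \<open>0 < s\<close> \<open>0 < 2 - ln s\<close> by simp
  qed (use assms in auto)
  finally show ?thesis by simp
qed

lemma has_real_derivative_phi_log_majorant:
  assumes "0 < s" "s \<le> 1"
  shows "((\<lambda>s. 2 * sqrt s / sqrt (2 - ln s)) has_real_derivative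
    1 / phi_log s + 1 / (sqrt s * (2 - ln s) * sqrt (2 - ln s))) (at s)"
proof -
  have p: "0 < 2 - ln s" using two_minus_ln_pos[OF assms] .
  have d1: "((\<lambda>s. 2 * sqrt s) has_real_derivative 2 * (inverse (sqrt s) / 2)) (at s)"
    by (rule DERIV_cmult, rule DERIV_real_sqrt) (use assms in simp)
  have d2: "((\<lambda>s. 2 - ln s) has_real_derivative 0 - 1 / s) (at s)"
    by (rule DERIV_diff, rule DERIV_const, rule DERIV_ln_divide) (use assms in simp)
  have d3: "((\<lambda>s. sqrt (2 - ln s)) has_real_derivative inverse (sqrt (2 - ln s)) / 2 * (0 - 1 / s)) (at s)"
    by (rule DERIV_chain2[OF DERIV_real_sqrt d2]) (use p in simp)
  have "((\<lambda>s. 2 * sqrt s / sqrt (2 - ln s)) has_real_derivative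
      (2 * (inverse (sqrt s) / 2) * sqrt (2 - ln s) -
        2 * sqrt s * (inverse (sqrt (2 - ln s)) / 2 * (0 - 1 / s))) /
      (sqrt (2 - ln s) * sqrt (2 - ln s))) (at s)"
    by (rule DERIV_divide[OF d1 d3]) (use p in simp)
  moreover have "(2 * (inverse (sqrt s) / 2) * sqrt (2 - ln s) -
        2 * sqrt s * (inverse (sqrt (2 - ln s)) / 2 * (0 - 1 / s))) /
      (sqrt (2 - ln s) * sqrt (2 - ln s)) =
    1 / phi_log s + 1 / (sqrt s * (2 - ln s) * sqrt (2 - ln s))"
  proof -
    have alg: "(2 * (inverse u / 2) * v - 2 * u * (inverse v / 2 * (0 - 1 / (u * u)))) / (v * v) =
        1 / (u * v) + 1 / (u * (v * v) * v)" if "0 < u" "0 < v" for u v :: real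
      using that by (simp add: field_simps)
    have "sqrt s * sqrt s = s" "sqrt (2 - ln s) * sqrt (2 - ln s) = 2 - ln s"
      using assms p by simp_all
    moreover have "phi_log s = sqrt s * sqrt (2 - ln s)"
      unfolding phi_log_def by (simp add: real_sqrt_mult)
    ultimately show ?thesis
      using alg[of "sqrt s" "sqrt (2 - ln s)"] assms p by simp
  qed
  ultimately show ?thesis by simp
qed

lemma nn_integral_recip_phi_log_le:
  assumes "0 < a" "a \<le> b" "b \<le> 1"
  shows "(\<integral>\<^sup>+s. ennreal (1 / phi_log s) * indicator {a<..b} s \<partial>I01) \<le>
    ennreal (2 * sqrt b / sqrt (2 - ln b))"
proof -
  define h where "h s = 1 / phi_log s + 1 / (sqrt s * (2 - ln s) * sqrt (2 - ln s))" for s :: real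
  have pos: "0 < s" "0 < 2 - ln s" "0 < phi_log s" if "s \<in> {a..b}" for s
    using that assms two_minus_ln_pos[of s] phi_log_pos[of s] by auto
  have recip_le: "1 / phi_log s \<le> h s" if "s \<in> {a..b}" for s
    using pos[OF that] by (simp add: h_def)
  have "(\<integral>\<^sup>+s. ennreal (1 / phi_log s) * indicator {a<..b} s \<partial>I01) \<le>
      (\<integral>\<^sup>+s. ennreal (h s) * indicator {a<..b} s \<partial>I01)"
    using recip_le by (intro nn_integral_mono) (simp add: indicator_def ennreal_leI)
  also have "\<dots> = ennreal (2 * sqrt b / sqrt (2 - ln b) - 2 * sqrt a / sqrt (2 - ln a))"
  proof (rule nn_integral_I01_Ioc_FTC)
    fix s assume s: "s \<in> {a..b}"
    then show "((\<lambda>s. 2 * sqrt s / sqrt (2 - ln s)) has_real_derivative h s) (at s)"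
      unfolding h_def using assms by (intro has_real_derivative_phi_log_majorant) auto
    have "0 \<le> 1 / phi_log s" using pos[OF s] by simp
    then show "0 \<le> h s" using recip_le[OF s] by linarith
  qed (use assms in auto)
  also have "\<dots> \<le> ennreal (2 * sqrt b / sqrt (2 - ln b))"
    using assms two_minus_ln_pos[of a] by (intro ennreal_leI) simp
  finally show ?thesis .
qed

definition phi_log_recip_tail :: "real \<Rightarrow> real \<Rightarrow> real" where
  "phi_log_recip_tail a t = indicator {a<..1} t / phi_log t"

lemma borel_measurable_phi_log_recip_tail[measurable]:
  "phi_log_recip_tail a \<in> borel_measurable I01"
  unfolding phi_log_recip_tail_def[abs_def] by measurable

lemma excess_integral_phi_log_recip_tail:
  assumes a: "0 < a" "a \<le> 1" and t: "0 < t" "t \<le> 1"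
  shows "excess_integral (1 / phi_log t) (phi_log_recip_tail a) \<le> ennreal (2 * sqrt t / sqrt (2 - ln t))"
proof -
  have "ennreal (\<bar>phi_log_recip_tail a s\<bar> - 1 / phi_log t) \<le>
      ennreal (1 / phi_log s) * indicator {a<..t} s" for s
  proof (cases "s \<in> {a<..t}")
    case True
    then have "\<bar>phi_log_recip_tail a s\<bar> = 1 / phi_log s"
      using a t phi_log_pos[of s] by (simp add: phi_log_recip_tail_def)
    then show ?thesis using True t phi_log_pos[of t] by (simp add: ennreal_leI)
  next
    case False
    have "\<bar>phi_log_recip_tail a s\<bar> \<le> 1 / phi_log t"
    proof (cases "s \<in> {a<..1}")
      case True
      then have "t < s" using False by auto
      then have "1 / phi_log s \<le> 1 / phi_log t"
        using True t phi_log_pos[of t] phi_log_mono[of t s] by (intro frac_le) auto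
      then show ?thesis using True a phi_log_pos[of s] by (simp add: phi_log_recip_tail_def)
    qed (use t phi_log_pos[of t] in \<open>simp add: phi_log_recip_tail_def\<close>)
    then show ?thesis by (simp add: ennreal_neg)
  qed
  then have "excess_integral (1 / phi_log t) (phi_log_recip_tail a) \<le>
      (\<integral>\<^sup>+s. ennreal (1 / phi_log s) * indicator {a<..t} s \<partial>I01)"
    unfolding excess_integral_def by (rule nn_integral_mono)
  also have "\<dots> \<le> ennreal (2 * sqrt t / sqrt (2 - ln t))"
  proof (cases "a \<le> t")
    case True
    then show ?thesis using a t by (intro nn_integral_recip_phi_log_le) auto
  qed simp
  finally show ?thesis .
qed

lemma marcinkiewicz_norm_phi_log_recip_tail:
  assumes "0 < a" "a \<le> 1"
  shows "marcinkiewicz_norm phi_log (phi_log_recip_tail a) \<le> 3"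
  unfolding marcinkiewicz_norm_def
proof (rule SUP_least)
  fix t :: real assume t: "t \<in> {0<..1}"
  have p: "0 < phi_log t" "0 < 2 - ln t" using t phi_log_pos two_minus_ln_pos by auto
  have "K_functional t (phi_log_recip_tail a) \<le>
      ennreal (t * (1 / phi_log t)) + excess_integral (1 / phi_log t) (phi_log_recip_tail a)"
    using p by (intro K_functional_le) simp
  also have "\<dots> \<le> ennreal (t * (1 / phi_log t)) + ennreal (2 * sqrt t / sqrt (2 - ln t))"
    using t by (intro add_left_mono excess_integral_phi_log_recip_tail assms) auto
  also have "\<dots> = ennreal (t / phi_log t + 2 * sqrt t / sqrt (2 - ln t))"
    using t p by (simp add: ennreal_plus)
  finally have "ennreal (phi_log t / t) * K_functional t (phi_log_recip_tail a) \<le>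
      ennreal (phi_log t / t) * ennreal (t / phi_log t + 2 * sqrt t / sqrt (2 - ln t))"
    by (rule mult_left_mono) simp
  also have "\<dots> = ennreal (phi_log t / t * (t / phi_log t + 2 * sqrt t / sqrt (2 - ln t)))"
    using t p by (intro ennreal_mult[symmetric]) auto
  also have "phi_log t / t * (t / phi_log t + 2 * sqrt t / sqrt (2 - ln t)) = 3"
  proof -
    have "phi_log t / t * (2 * sqrt t / sqrt (2 - ln t)) =
        (sqrt t * sqrt (2 - ln t)) / t * (2 * sqrt t / sqrt (2 - ln t))"
      by (simp add: phi_log_def real_sqrt_mult)
    also have "\<dots> = 2 * (sqrt t * sqrt t) / t" using p by (simp add: field_simps)
    also have "\<dots> = 2" using t by simp
    finally show ?thesis using t p by (simp add: distrib_left)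
  qed
  finally show "ennreal (phi_log t / t) * K_functional t (phi_log_recip_tail a) \<le> 3" by simp
qed

definition block_end :: "nat \<Rightarrow> real" where
  "block_end n = exp (2 - 2 * exp (real n))"

lemma block_end_pos: "0 < block_end n"
  by (simp add: block_end_def)

lemma block_end_le_1: "block_end n \<le> 1"
  by (simp add: block_end_def)

lemma block_end_antimono: "m \<le> n \<Longrightarrow> block_end n \<le> block_end m"
  by (simp add: block_end_def)

lemma ln_two_minus_ln_block_end: "ln (2 - ln (block_end n)) = ln 2 + real n"
  by (simp add: block_end_def ln_mult)

definition log_block :: "nat \<Rightarrow> real \<Rightarrow> real" where
  "log_block n t = indicator {block_end (Suc n)<..block_end n} t / phi_log t"

lemma borel_measurable_log_block[measurable]: "log_block n \<in> borel_measurable I01"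
  unfolding log_block_def[abs_def] by measurable

lemma sq_nn_integral_log_block: "sq_nn_integral (log_block n) = 1"
proof -
  have "sq_nn_integral (log_block n) =
      (\<integral>\<^sup>+s. ennreal ((1 / phi_log s)\<^sup>2) * indicator {block_end (Suc n)<..block_end n} s \<partial>I01)"
    unfolding sq_nn_integral_def log_block_def
    by (intro nn_integral_cong) (simp add: indicator_def power_divide)
  also have "\<dots> = 1"
    using block_end_pos[of "Suc n"] block_end_le_1[of n] block_end_antimono[of n "Suc n"]
    by (simp add: nn_integral_recip_phi_log_sq ln_two_minus_ln_block_end)
  finally show ?thesis .
qed

lemma log_block_in_L2_space: "log_block n \<in> L2_space"
  by (simp add: L2_space_def sq_nn_integral_log_block)

lemma L2_norm_log_block: "L2_norm (log_block n) = 1"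
  by (simp add: L2_norm_def sq_nn_integral_log_block)

lemma abs_log_block_le_tail:
  "n < N \<Longrightarrow> \<bar>log_block n t\<bar> \<le> \<bar>phi_log_recip_tail (block_end N) t\<bar>"
  using block_end_antimono[of "Suc n" N] block_end_le_1[of n]
  by (auto simp: log_block_def phi_log_recip_tail_def indicator_def)

lemma log_block_in_L2_marcinkiewicz_space: "log_block n \<in> L2_marcinkiewicz_space phi_log"
proof -
  have "marcinkiewicz_norm phi_log (log_block n) \<le>
      marcinkiewicz_norm phi_log (phi_log_recip_tail (block_end (Suc n)))"
    by (intro marcinkiewicz_norm_mono AE_I2 abs_log_block_le_tail) simp
  also have "\<dots> \<le> 3"
    using block_end_pos block_end_le_1 by (rule marcinkiewicz_norm_phi_log_recip_tail)
  finally have "marcinkiewicz_norm phi_log (log_block n) < \<infinity>"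
    by (rule le_less_trans) simp
  then show ?thesis using log_block_in_L2_space by (simp add: L2_marcinkiewicz_space_def)
qed

lemma log_block_disjoint: "i \<noteq> j \<Longrightarrow> log_block i t = 0 \<or> log_block j t = 0"
proof (rule ccontr)
  assume "i \<noteq> j" "\<not> (log_block i t = 0 \<or> log_block j t = 0)"
  then have "block_end (Suc i) < t" "t \<le> block_end i" "block_end (Suc j) < t" "t \<le> block_end j"
    by (auto simp: log_block_def indicator_def split: if_splits)
  moreover have "block_end j \<le> block_end (Suc i) \<or> block_end i \<le> block_end (Suc j)"
    using \<open>i \<noteq> j\<close> by (cases "i < j") (auto intro!: block_end_antimono)
  ultimately show False by linarith
qed

lemma sum_log_block_eq_single:
  assumes "j < N" "log_block j t \<noteq> 0"
  shows "(\<Sum>i<N. c i * log_block i t) = c j * log_block j t"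
proof -
  have "(\<Sum>i<N. c i * log_block i t) = c j * log_block j t + (\<Sum>i\<in>{..<N} - {j}. c i * log_block i t)"
    using assms by (subst sum.remove[of _ j]) auto
  also have "(\<Sum>i\<in>{..<N} - {j}. c i * log_block i t) = 0"
    using assms log_block_disjoint[of _ j t] by (intro sum.neutral) auto
  finally show ?thesis by simp
qed

lemma abs_coeff_le_L2_norm_log_block_span:
  assumes "j < N"
  shows "\<bar>c j\<bar> \<le> L2_norm (\<lambda>t. \<Sum>i<N. c i * log_block i t)"
proof -
  let ?y = "\<lambda>t. \<Sum>i<N. c i * log_block i t"
  have "?y \<in> lin_span log_block"
    unfolding lin_span_def by (intro CollectI exI) (rule refl)
  then have yL2: "?y \<in> L2_space"
    using lin_span_subset[of L2_space L2_norm log_block, OF symmetric_space_L2 log_block_in_L2_space]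
    by blast
  have "\<bar>c j * log_block j t\<bar> \<le> \<bar>?y t\<bar>" for t
    using sum_log_block_eq_single[OF assms, of t c] by (cases "log_block j t = 0") simp_all
  then have "L2_norm (\<lambda>t. c j * log_block j t) \<le> L2_norm ?y"
    using L2_space_ideal[OF yL2] by simp
  then show ?thesis by (simp add: L2_norm_cmult L2_norm_log_block)
qed

lemma abs_log_block_span_le_tail:
  assumes "\<And>i. i < N \<Longrightarrow> \<bar>c i\<bar> \<le> m" "0 \<le> m"
  shows "\<bar>\<Sum>i<N. c i * log_block i t\<bar> \<le> m * \<bar>phi_log_recip_tail (block_end N) t\<bar>"
proof (cases "\<exists>j<N. log_block j t \<noteq> 0")
  case True
  then obtain j where j: "j < N" "log_block j t \<noteq> 0" by blast
  then have "\<bar>\<Sum>i<N. c i * log_block i t\<bar> = \<bar>c j\<bar> * \<bar>log_block j t\<bar>"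
    by (simp add: sum_log_block_eq_single abs_mult)
  also have "\<dots> \<le> m * \<bar>phi_log_recip_tail (block_end N) t\<bar>"
    using j assms(1)[of j] assms(2) by (intro mult_mono abs_log_block_le_tail) auto
  finally show ?thesis .
next
  case False
  then show ?thesis using assms(2) by simp
qed

lemma L2_marcinkiewicz_norm_log_block_span_le:
  fixes N :: nat and c :: "nat \<Rightarrow> real"
  defines "y \<equiv> \<lambda>t. \<Sum>i<N. c i * log_block i t"
  shows "L2_marcinkiewicz_norm phi_log y \<le> 4 * L2_norm y"
proof -
  define m where "m = Max (insert 0 ((\<lambda>i. \<bar>c i\<bar>) ` {..<N}))"
  have m_ge: "\<bar>c i\<bar> \<le> m" if "i < N" for i unfolding m_def using that by (intro Max_ge) auto
  have m_nonneg: "0 \<le> m" unfolding m_def by (intro Max_ge) auto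
  have "m \<in> insert 0 ((\<lambda>i. \<bar>c i\<bar>) ` {..<N})" unfolding m_def by (intro Max_in) auto
  then have "m \<le> L2_norm y"
    using abs_coeff_le_L2_norm_log_block_span[of _ N c] L2_norm_nonneg[of y] by (auto simp: y_def)
  have "marcinkiewicz_norm phi_log y \<le>
      marcinkiewicz_norm phi_log (\<lambda>t. m * phi_log_recip_tail (block_end N) t)"
    using abs_log_block_span_le_tail[OF m_ge m_nonneg] m_nonneg
    by (intro marcinkiewicz_norm_mono AE_I2) (simp add: y_def abs_mult)
  also have "\<dots> \<le> ennreal m * 3"
    using m_nonneg marcinkiewicz_norm_phi_log_recip_tail[OF block_end_pos block_end_le_1]
    by (simp add: marcinkiewicz_norm_cmult mult_left_mono)
  finally have "enn2real (marcinkiewicz_norm phi_log y) \<le> 3 * m"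
    using m_nonneg by (intro enn2real_leI) (simp_all add: ennreal_mult' mult.commute)
  then show ?thesis
    using \<open>m \<le> L2_norm y\<close> unfolding L2_marcinkiewicz_norm_def by linarith
qed

lemma not_DSS_L2_marcinkiewicz_phi_log_into_L2:
  "\<not> DSS (L2_marcinkiewicz_space phi_log) (L2_marcinkiewicz_norm phi_log) L2_norm (\<lambda>x. x)"
proof (rule not_DSS_if_norms_equivalent_on_lin_span[OF symmetric_space_L2_marcinkiewicz
      symmetric_space_L2 L2_marcinkiewicz_space_subset])
  show "L2_norm z \<le> L2_marcinkiewicz_norm phi_log z" for z
    by (rule L2_norm_le_L2_marcinkiewicz_norm)
  show "log_block n \<in> L2_marcinkiewicz_space phi_log" for n
    by (rule log_block_in_L2_marcinkiewicz_space)
  show "L2_marcinkiewicz_norm phi_log (log_block n) \<noteq> 0" for n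
    using L2_norm_le_L2_marcinkiewicz_norm[of "log_block n" phi_log] L2_norm_log_block[of n] by simp
  show "AE t in I01. log_block i t * log_block j t = 0" if "i \<noteq> j" for i j
    using log_block_disjoint[OF that] by (intro AE_I2) auto
  show "L2_marcinkiewicz_norm phi_log y \<le> 4 * L2_norm y" if "y \<in> lin_span log_block" for y
    using that L2_marcinkiewicz_norm_log_block_span_le by (auto simp: lin_span_def)
qed simp

theorem theorem3:
  shows "\<exists>E NE F NF.
     symmetric_space E NE \<and> symmetric_space F NF \<and>
     in_G (fund_fun NE) \<and> in_G (fund_fun NF) \<and>
     E \<subseteq> F \<and>
     ((\<lambda>t. fund_fun NF t / fund_fun NE t) \<longlongrightarrow> 0) (at_right 0) \<and>
     (\<exists>C. \<forall>x\<in>E. NF x \<le> C * NE x) \<and>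
     \<not> DSS E NE NF (\<lambda>x. x)"
proof -
  have "\<forall>x\<in>L2_marcinkiewicz_space phi_log. L2_norm x \<le> 1 * L2_marcinkiewicz_norm phi_log x"
    by (simp add: L2_norm_le_L2_marcinkiewicz_norm)
  moreover have "in_G (fund_fun (L2_marcinkiewicz_norm phi_log))"
    by (rule in_G_cong[OF fund_fun_L2_marcinkiewicz_phi_log in_G_sqrt_add_phi_log])
  moreover have "in_G (fund_fun L2_norm)" by (rule in_G_cong[OF fund_fun_L2 in_G_sqrt])
  ultimately show ?thesis
    using symmetric_space_L2_marcinkiewicz symmetric_space_L2 L2_marcinkiewicz_space_subset
      fund_fun_ratio_tendsto_zero not_DSS_L2_marcinkiewicz_phi_log_into_L2 by blast
qed
end
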